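(* Let $W(D_4)\subset \mathrm{O}_4(\mathbb R)$ be the group of matrices $D\cdot P(\pi)$ with $D=\mathrm{diag}(\varepsilon_1,\dots,\varepsilon_4)$, $\varepsilon_i=\pm1$, $\prod_i\varepsilon_i=1$, and $P(\pi)$ the permutation matrix of $\pi\in\mathfrak S_4$. Let $$\mu=\tfrac12\begin{pmatrix}1&1&1&-1\\1&1&-1&1\\1&-1&1&1\\1&-1&-1&-1\end{pmatrix},\qquad \rho=\tfrac12\begin{pmatrix}-1&1&1&1\\-1&-1&1&-1\\-1&-1&-1&1\\-1&1&-1&-1\end{pmatrix},$$ and let $\tilde\mu,\tilde\rho$ be the automorphisms of $W(D_4)$ given by $x\mapsto\mu x\mu^{-1}$ and $x\mapsto\rho x\rho^{-1}$. Then every trialitarian automorphism of $W(D_4)$ is conjugate in the group $\mathrm{Aut}(W(D_4))$ to either $\tilde\mu$ or $\tilde\rho$.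
   Context: A trialitarian automorphism of $W(D_4)$ is an automorphism of order $3$ which is not inner. Conjugation by $\mu$ and by $\rho$ normalizes $W(D_4)$, and $\tilde\mu,\tilde\rho$ are trialitarian. *)

theory Defs
  imports "HOL-Analysis.Analysis" "HOL-Algebra.Group" "HOL-Combinatorics.Permutations"
begin

type_synonym mat4 = "real^4^4"

definition perm_mat :: "(4 \<Rightarrow> 4) \<Rightarrow> mat4" where
  "perm_mat p = (\<chi> i j. if i = p j then 1 else 0)"

definition diag_mat :: "(4 \<Rightarrow> real) \<Rightarrow> mat4" where
  "diag_mat e = (\<chi> i j. if i = j then e i else 0)"

definition WD4 :: "mat4 set" where
  "WD4 = {diag_mat e ** perm_mat p | e p.
            (\<forall>i. e i = 1 \<or> e i = -1) \<and> (\<Prod>i\<in>UNIV. e i) = 1 \<and> p permutes (UNIV :: 4 set)}"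

definition WD4_grp :: "mat4 monoid" where
  "WD4_grp = \<lparr>carrier = WD4, mult = (\<lambda>x y. x ** y), one = mat 1\<rparr>"

definition mu :: mat4 where
  "mu = (1/2) *\<^sub>R vector [vector [1,1,1,-1], vector [1,1,-1,1],
                            vector [1,-1,1,1], vector [1,-1,-1,-1]]"

definition rho :: mat4 where
  "rho = (1/2) *\<^sub>R vector [vector [-1,1,1,1], vector [-1,-1,1,-1],
                             vector [-1,-1,-1,1], vector [-1,1,-1,-1]]"

definition conj_by :: "mat4 \<Rightarrow> mat4 \<Rightarrow> mat4" where
  "conj_by g x = g ** x ** matrix_inv g"

definition aut_WD4 :: "(mat4 \<Rightarrow> mat4) set" where
  "aut_WD4 = iso WD4_grp WD4_grp"

definition inner_WD4 :: "(mat4 \<Rightarrow> mat4) \<Rightarrow> bool" where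
  "inner_WD4 f \<longleftrightarrow> (\<exists>g\<in>WD4. \<forall>x\<in>WD4. f x = conj_by g x)"

definition trialitarian :: "(mat4 \<Rightarrow> mat4) \<Rightarrow> bool" where
  "trialitarian f \<longleftrightarrow> f \<in> aut_WD4 \<and> (\<forall>x\<in>WD4. f (f (f x)) = x) \<and> \<not> (\<forall>x\<in>WD4. f x = x)
      \<and> \<not> inner_WD4 f"

definition aut_conjugate :: "(mat4 \<Rightarrow> mat4) \<Rightarrow> (mat4 \<Rightarrow> mat4) \<Rightarrow> bool" where
  "aut_conjugate f g \<longleftrightarrow> (\<exists>psi\<in>aut_WD4. \<forall>x\<in>WD4. f (psi x) = psi (g x))"

end

theory Submission
  imports Defs
begin

text \<open>\<open>W(D\<^sub>4)\<close> consists of the signed permutation matrices with an even number of entries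
  \<open>-1\<close>; coding them by the signed images of the basis vectors makes the group law computable by
  the simplifier. \<open>W(D\<^sub>4)\<close> is generated by an element \<open>a\<close> of order 4 and an element \<open>b\<close> of order 3,
  so an automorphism \<open>f\<close> is determined by \<open>x = f a\<close> and \<open>y = f b\<close>. These again have orders 4 and 3,
  \<open>xy\<close> and \<open>xy\<^sup>2\<close> have order 4 like \<open>ab\<close> and \<open>ab\<^sup>2\<close>, and \<open>f\<^sup>3 = 1\<close> can be tested on \<open>a\<close> and \<open>b\<close> after
  writing \<open>x\<close> and \<open>y\<close> as words in \<open>a\<close> and \<open>b\<close>. Running through all such pairs shows that \<open>(x, y)\<close> is
  the image of \<open>(a, b)\<close> either under an inner automorphism or under \<open>\<psi> \<circ> conj_by \<mu> \<circ> \<psi>\<inverse>\<close> or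
  \<open>\<psi> \<circ> conj_by \<rho> \<circ> \<psi>\<inverse>\<close>, where \<open>\<psi>\<close> is conjugation by a signed permutation matrix, which
  normalises \<open>W(D\<^sub>4)\<close>.\<close>

section \<open>Even signed permutations\<close>

datatype ix = I1 | I2 | I3 | I4
datatype sidx = Pos ix | Neg ix
datatype sperm = SP sidx sidx sidx sidx

lemma UNIV_ix: "(UNIV :: ix set) = {I1, I2, I3, I4}"
  using ix.exhaust by auto

instance ix :: finite
  by standard (simp add: UNIV_ix)

fun sperm_at :: "sperm \<Rightarrow> ix \<Rightarrow> sidx" where
  "sperm_at (SP a b c d) I1 = a"
| "sperm_at (SP a b c d) I2 = b"
| "sperm_at (SP a b c d) I3 = c"
| "sperm_at (SP a b c d) I4 = d"

fun sidx_index :: "sidx \<Rightarrow> ix" where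
  "sidx_index (Pos i) = i"
| "sidx_index (Neg i) = i"

fun sidx_sign :: "sidx \<Rightarrow> real" where
  "sidx_sign (Pos i) = 1"
| "sidx_sign (Neg i) = -1"

fun sidx_neg :: "sidx \<Rightarrow> sidx" where
  "sidx_neg (Pos i) = Neg i"
| "sidx_neg (Neg i) = Pos i"

fun sperm_app :: "sperm \<Rightarrow> sidx \<Rightarrow> sidx" where
  "sperm_app x (Pos i) = sperm_at x i"
| "sperm_app x (Neg i) = sidx_neg (sperm_at x i)"

fun sperm_mult :: "sperm \<Rightarrow> sperm \<Rightarrow> sperm" (infixl "\<odot>" 70) where
  "x \<odot> SP a b c d = SP (sperm_app x a) (sperm_app x b) (sperm_app x c) (sperm_app x d)"

definition sperm_one :: sperm where
  "sperm_one = SP (Pos I1) (Pos I2) (Pos I3) (Pos I4)"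

definition sperm_perm :: "sperm \<Rightarrow> ix \<Rightarrow> ix" where
  "sperm_perm x j = sidx_index (sperm_at x j)"

definition sperm_signs :: "sperm \<Rightarrow> real" where
  "sperm_signs x = (\<Prod>j\<in>UNIV. sidx_sign (sperm_at x j))"

definition even_sperm :: "sperm \<Rightarrow> bool" where
  "even_sperm x \<longleftrightarrow> bij (sperm_perm x) \<and> sperm_signs x = 1"

lemma sperm_eqI: "(\<And>j. sperm_at x j = sperm_at y j) \<Longrightarrow> x = y"
  by (cases x; cases y) (metis sperm_at.simps)

lemma sidx_eqI: "sidx_index s = sidx_index t \<Longrightarrow> sidx_sign s = sidx_sign t \<Longrightarrow> s = t"
  by (cases s; cases t) auto

lemma sidx_sign_cases: "sidx_sign s = 1 \<or> sidx_sign s = -1"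
  by (cases s) auto

lemma sidx_sign_nonzero [simp]: "sidx_sign s \<noteq> 0"
  by (cases s) auto

lemma sidx_index_neg [simp]: "sidx_index (sidx_neg s) = sidx_index s"
  by (cases s) auto

lemma sidx_sign_neg [simp]: "sidx_sign (sidx_neg s) = - sidx_sign s"
  by (cases s) auto

lemma sidx_index_app: "sidx_index (sperm_app x s) = sperm_perm x (sidx_index s)"
  by (cases s) (auto simp: sperm_perm_def)

lemma sidx_sign_app: "sidx_sign (sperm_app x s) = sidx_sign s * sidx_sign (sperm_at x (sidx_index s))"
  by (cases s) auto

lemma sperm_at_mult: "sperm_at (x \<odot> y) j = sperm_app x (sperm_at y j)"
  by (cases y; cases j) auto

lemma sperm_at_one [simp]: "sperm_at sperm_one j = Pos j"
  by (cases j) (auto simp: sperm_one_def)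

lemma sperm_perm_mult: "sperm_perm (x \<odot> y) = sperm_perm x \<circ> sperm_perm y"
  by (auto simp: sperm_perm_def sperm_at_mult sidx_index_app)

lemma sperm_perm_one: "sperm_perm sperm_one = id"
  by (auto simp: sperm_perm_def)

lemma sperm_signs_one: "sperm_signs sperm_one = 1"
  by (simp add: sperm_signs_def)

lemma sperm_signs_mult:
  assumes "bij (sperm_perm y)"
  shows "sperm_signs (x \<odot> y) = sperm_signs x * sperm_signs y"
proof -
  have "sperm_signs (x \<odot> y)
      = sperm_signs y * (\<Prod>j\<in>UNIV. (\<lambda>i. sidx_sign (sperm_at x i)) (sperm_perm y j))"
    by (simp add: sperm_signs_def sperm_at_mult sidx_sign_app sperm_perm_def prod.distrib)
  also have "(\<Prod>j\<in>UNIV. (\<lambda>i. sidx_sign (sperm_at x i)) (sperm_perm y j)) = sperm_signs x"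
    unfolding sperm_signs_def by (rule prod.reindex_bij_betw[OF assms])
  finally show ?thesis by simp
qed

lemma even_sperm_one: "even_sperm sperm_one"
  by (simp add: even_sperm_def sperm_perm_one sperm_signs_one)

lemma even_sperm_mult: "even_sperm x \<Longrightarrow> even_sperm y \<Longrightarrow> even_sperm (x \<odot> y)"
  by (simp add: even_sperm_def sperm_perm_mult sperm_signs_mult bij_comp)

lemma bij_sperm_perm_iff:
  "bij (sperm_perm x) \<longleftrightarrow>
     distinct [sperm_perm x I1, sperm_perm x I2, sperm_perm x I3, sperm_perm x I4]"
proof -
  have "distinct [I1, I2, I3, I4]" "set [I1, I2, I3, I4] = UNIV"
    by (simp_all add: UNIV_ix)
  then have "inj (sperm_perm x) \<longleftrightarrow> distinct (map (sperm_perm x) [I1, I2, I3, I4])"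
    by (metis distinct_map)
  then show ?thesis
    using finite_UNIV_inj_surj[of "sperm_perm x"] by (auto simp: bij_def)
qed

text \<open>The form of evenness that the simplifier evaluates on concrete signed permutations.\<close>
lemma even_sperm_iff:
  "even_sperm x \<longleftrightarrow>
     distinct [sperm_perm x I1, sperm_perm x I2, sperm_perm x I3, sperm_perm x I4] \<and>
     sidx_sign (sperm_at x I1) * sidx_sign (sperm_at x I2) *
     sidx_sign (sperm_at x I3) * sidx_sign (sperm_at x I4) = 1"
  unfolding even_sperm_def bij_sperm_perm_iff sperm_signs_def by (simp add: UNIV_ix mult.assoc)

lemma idempotent_sperm_eq_one:
  assumes "bij (sperm_perm z)" and "z \<odot> z = z"
  shows "z = sperm_one"
proof (rule sperm_eqI)
  fix j
  have "sperm_perm z \<circ> sperm_perm z = sperm_perm z"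
    using assms(2) by (metis sperm_perm_mult)
  then have perm: "sperm_perm z i = i" for i
    using assms(1) by (metis bij_is_inj comp_apply injD)
  have "sperm_app z (sperm_at z j) = sperm_at z j"
    using assms(2) by (metis sperm_at_mult)
  then have "sidx_sign (sperm_at z j) = sidx_sign (sperm_at z j) * sidx_sign (sperm_at z j)"
    using perm by (metis sidx_sign_app sperm_perm_def)
  then have "sidx_sign (sperm_at z j) = 1"
    by simp
  then show "sperm_at z j = sperm_at sperm_one j"
    using perm[of j] by (intro sidx_eqI) (simp_all add: sperm_perm_def)
qed

fun ix4 :: "ix \<Rightarrow> 4" where
  "ix4 I1 = 1"
| "ix4 I2 = 2"
| "ix4 I3 = 3"
| "ix4 I4 = 4"

definition ix_of :: "4 \<Rightarrow> ix" where
  "ix_of k = (if k = 1 then I1 else if k = 2 then I2 else if k = 3 then I3 else I4)"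

lemma ix_of_ix4 [simp]: "ix_of (ix4 i) = i"
  by (cases i) (simp_all add: ix_of_def)

lemma ix4_ix_of [simp]: "ix4 (ix_of k) = k"
  using exhaust_4[of k] by (auto simp: ix_of_def)

lemma ix_of_numeral [simp]: "ix_of 1 = I1" "ix_of 2 = I2" "ix_of 3 = I3" "ix_of 4 = I4"
  by (simp_all add: ix_of_def)

lemma bij_ix4: "bij ix4"
  by (rule bij_betw_byWitness[where f' = ix_of]) auto

lemma bij_ix_of: "bij ix_of"
  by (rule bij_betw_byWitness[where f' = ix4]) auto

text \<open>Column \<open>j\<close> of \<open>sperm_mat x\<close> is the basis vector \<open>\<plusminus>e\<^sub>i\<close> for \<open>sperm_at x j = \<plusminus>i\<close>.\<close>
definition sperm_mat :: "sperm \<Rightarrow> mat4" where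
  "sperm_mat x = (\<chi> i j. if i = ix4 (sidx_index (sperm_at x (ix_of j)))
                          then sidx_sign (sperm_at x (ix_of j)) else 0)"

lemma sperm_mat_nth:
  "sperm_mat x $ i $ j =
     (if i = ix4 (sidx_index (sperm_at x (ix_of j))) then sidx_sign (sperm_at x (ix_of j)) else 0)"
  by (simp add: sperm_mat_def)

lemma sperm_mat_mult: "sperm_mat x ** sperm_mat y = sperm_mat (x \<odot> y)"
proof -
  have "(sperm_mat x ** sperm_mat y) $ i $ j = sperm_mat (x \<odot> y) $ i $ j" for i j
  proof -
    let ?s = "sperm_at y (ix_of j)"
    have "(sperm_mat x ** sperm_mat y) $ i $ j = (\<Sum>k\<in>UNIV. sperm_mat x $ i $ k * sperm_mat y $ k $ j)"
      by (simp add: matrix_matrix_mult_def)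
    also have "\<dots> = (\<Sum>k\<in>UNIV. if k = ix4 (sidx_index ?s) then sperm_mat x $ i $ k * sidx_sign ?s else 0)"
      by (rule sum.cong) (auto simp: sperm_mat_nth)
    also have "\<dots> = sperm_mat x $ i $ ix4 (sidx_index ?s) * sidx_sign ?s"
      by simp
    also have "\<dots> = sperm_mat (x \<odot> y) $ i $ j"
      by (simp add: sperm_mat_nth sperm_at_mult sidx_index_app sidx_sign_app sperm_perm_def)
    finally show ?thesis .
  qed
  then show ?thesis
    by (simp add: vec_eq_iff)
qed

lemma sperm_mat_one: "sperm_mat sperm_one = mat 1"
  by (auto simp: vec_eq_iff sperm_mat_nth mat_def)

lemma inj_sperm_mat: "inj sperm_mat"
proof (rule injI, rule sperm_eqI)
  fix x y j
  assume "sperm_mat x = sperm_mat y"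
  then have "sperm_mat x $ ix4 (sidx_index (sperm_at x j)) $ ix4 j
           = sperm_mat y $ ix4 (sidx_index (sperm_at x j)) $ ix4 j"
    by simp
  then have "sidx_sign (sperm_at x j) =
      (if sidx_index (sperm_at x j) = sidx_index (sperm_at y j) then sidx_sign (sperm_at y j) else 0)"
    by (simp add: sperm_mat_nth bij_is_inj[OF bij_ix4] inj_eq)
  then show "sperm_at x j = sperm_at y j"
    by (metis sidx_eqI sidx_sign_nonzero)
qed

lemma diag_perm_mat_nth: "(diag_mat e ** perm_mat p) $ i $ j = (if i = p j then e i else 0)"
proof -
  have "(diag_mat e ** perm_mat p) $ i $ j = (\<Sum>k\<in>UNIV. diag_mat e $ i $ k * perm_mat p $ k $ j)"
    by (simp add: matrix_matrix_mult_def)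
  also have "\<dots> = (\<Sum>k\<in>UNIV. if k = i then (if i = p j then e i else 0) else 0)"
    by (rule sum.cong) (auto simp: diag_mat_def perm_mat_def)
  finally show ?thesis
    by simp
qed

lemma WD4_elem_is_sperm_mat:
  assumes "m \<in> WD4"
  obtains x where "even_sperm x" and "m = sperm_mat x"
proof -
  from assms obtain e p where m: "m = diag_mat e ** perm_mat p"
    and e: "\<forall>i. e i = 1 \<or> e i = -1" and e_prod: "(\<Prod>i\<in>UNIV. e i) = 1"
    and p: "p permutes (UNIV :: 4 set)"
    unfolding WD4_def by blast
  define s where "s j = (if e (p (ix4 j)) = 1 then Pos else Neg) (ix_of (p (ix4 j)))" for j
  define x where "x = SP (s I1) (s I2) (s I3) (s I4)"
  have at_x: "sperm_at x j = s j" for j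
    by (cases j) (auto simp: x_def)
  have index_s: "sidx_index (s j) = ix_of (p (ix4 j))" for j
    by (simp add: s_def)
  have sign_s: "sidx_sign (s j) = e (p (ix4 j))" for j
    using e[rule_format, of "p (ix4 j)"] by (auto simp: s_def)
  have "m = sperm_mat x"
    by (simp add: vec_eq_iff m diag_perm_mat_nth sperm_mat_nth at_x index_s sign_s)
  moreover have "bij (sperm_perm x)"
  proof -
    have "sperm_perm x = ix_of \<circ> p \<circ> ix4"
      by (auto simp: sperm_perm_def at_x index_s)
    then show ?thesis
      using bij_ix_of bij_ix4 permutes_bij[OF p] by (simp add: bij_comp)
  qed
  moreover have "sperm_signs x = 1"
  proof -
    have "sperm_signs x = (\<Prod>j\<in>UNIV. e ((p \<circ> ix4) j))"
      by (simp add: sperm_signs_def at_x sign_s)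
    also have "\<dots> = (\<Prod>i\<in>UNIV. e i)"
      using prod.reindex_bij_betw[of "p \<circ> ix4" UNIV UNIV e] bij_ix4 permutes_bij[OF p]
      by (simp add: bij_comp)
    finally show ?thesis
      using e_prod by simp
  qed
  ultimately show ?thesis
    using that by (auto simp: even_sperm_def)
qed

lemma sperm_mat_in_WD4:
  assumes "even_sperm x"
  shows "sperm_mat x \<in> WD4"
proof -
  have bij: "bij (sperm_perm x)" and signs: "sperm_signs x = 1"
    using assms by (auto simp: even_sperm_def)
  define p where "p = ix4 \<circ> sperm_perm x \<circ> ix_of"
  define e where "e i = sidx_sign (sperm_at x (inv_into UNIV (sperm_perm x) (ix_of i)))" for i
  have p: "p permutes UNIV"
    by (rule bij_imp_permutes) (auto simp: p_def intro: bij_comp bij bij_ix4 bij_ix_of)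
  have e: "\<forall>i. e i = 1 \<or> e i = -1"
    by (simp add: e_def sidx_sign_cases)
  have "(\<Prod>i\<in>UNIV. e i) =
      (\<Prod>i\<in>UNIV. (\<lambda>j. sidx_sign (sperm_at x j)) ((inv_into UNIV (sperm_perm x) \<circ> ix_of) i))"
    by (simp add: e_def)
  also have "\<dots> = sperm_signs x"
    unfolding sperm_signs_def
    by (rule prod.reindex_bij_betw, rule bij_comp[OF bij_ix_of bij_imp_bij_inv[OF bij]])
  finally have e_prod: "(\<Prod>i\<in>UNIV. e i) = 1"
    using signs by simp
  have "inv_into UNIV (sperm_perm x) (sperm_perm x j) = j" for j
    using bij by (simp add: bij_is_inj)
  then have "sperm_mat x = diag_mat e ** perm_mat p"
    by (auto simp: vec_eq_iff diag_perm_mat_nth sperm_mat_nth p_def e_def sperm_perm_def)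
  then show ?thesis
    unfolding WD4_def using e e_prod p by blast
qed

lemma WD4_eq_image_sperm_mat: "WD4 = sperm_mat ` {x. even_sperm x}"
  using WD4_elem_is_sperm_mat sperm_mat_in_WD4 by blast

section \<open>Words, conjugation and automorphisms\<close>

lemma sperm_mult_assoc: "x \<odot> (y \<odot> z) = x \<odot> y \<odot> z"
  by (rule injD[OF inj_sperm_mat]) (simp add: sperm_mat_mult[symmetric] matrix_mul_assoc)

lemma sperm_mult_one_left [simp]: "sperm_one \<odot> x = x"
  by (rule injD[OF inj_sperm_mat]) (simp add: sperm_mat_mult[symmetric] sperm_mat_one)

lemma sperm_mult_one_right [simp]: "x \<odot> sperm_one = x"
  by (rule injD[OF inj_sperm_mat]) (simp add: sperm_mat_mult[symmetric] sperm_mat_one)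

lemma sperm_mult_cancel: "a \<odot> b = sperm_one \<Longrightarrow> x \<odot> a \<odot> b = x"
  by (metis sperm_mult_assoc sperm_mult_one_right)

datatype gen_letter = GA | GB

fun word_eval :: "gen_letter list \<Rightarrow> sperm \<Rightarrow> sperm \<Rightarrow> sperm" where
  "word_eval [] a b = sperm_one"
| "word_eval (GA # w) a b = a \<odot> word_eval w a b"
| "word_eval (GB # w) a b = b \<odot> word_eval w a b"

lemma even_sperm_word_eval: "even_sperm a \<Longrightarrow> even_sperm b \<Longrightarrow> even_sperm (word_eval w a b)"
  by (induction w a b rule: word_eval.induct) (auto simp: even_sperm_one even_sperm_mult)

definition sperm_conj :: "sperm \<Rightarrow> sperm \<Rightarrow> sperm \<Rightarrow> sperm" where
  "sperm_conj h h' z = h \<odot> z \<odot> h'"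

lemma sperm_conj_mult:
  assumes "h' \<odot> h = sperm_one"
  shows "sperm_conj h h' (u \<odot> v) = sperm_conj h h' u \<odot> sperm_conj h h' v"
  by (simp add: sperm_conj_def sperm_mult_assoc sperm_mult_cancel[OF assms])

lemma sperm_conj_word_eval:
  assumes "h \<odot> h' = sperm_one" "h' \<odot> h = sperm_one"
  shows "sperm_conj h h' (word_eval w a b) = word_eval w (sperm_conj h h' a) (sperm_conj h h' b)"
proof -
  have "sperm_conj h h' sperm_one = sperm_one"
    using assms(1) by (simp add: sperm_conj_def)
  then show ?thesis
    by (induction w a b rule: word_eval.induct) (simp_all add: sperm_conj_mult[OF assms(2)])
qed

lemma bij_sperm_perm_if_inverse:
  assumes "h \<odot> h' = sperm_one" "h' \<odot> h = sperm_one"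
  shows "bij (sperm_perm h)"
proof (rule o_bij)
  show "sperm_perm h' \<circ> sperm_perm h = id" "sperm_perm h \<circ> sperm_perm h' = id"
    using assms by (metis sperm_perm_mult sperm_perm_one)+
qed

lemma even_sperm_conj:
  assumes "even_sperm z" "h \<odot> h' = sperm_one" "h' \<odot> h = sperm_one"
  shows "even_sperm (sperm_conj h h' z)"
proof -
  have bij: "bij (sperm_perm h)" "bij (sperm_perm h')" "bij (sperm_perm z)"
    using assms bij_sperm_perm_if_inverse by (auto simp: even_sperm_def)
  have "sperm_signs (sperm_conj h h' z) = sperm_signs z * sperm_signs (h \<odot> h')"
    by (simp add: sperm_conj_def sperm_signs_mult bij)
  then have "sperm_signs (sperm_conj h h' z) = 1"
    using assms by (simp add: sperm_signs_one even_sperm_def)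
  then show ?thesis
    using bij by (simp add: even_sperm_def sperm_conj_def sperm_perm_mult bij_comp)
qed

lemma matrix_inv_eqI:
  fixes A B :: "'a::field^'n^'n"
  assumes "A ** B = mat 1" "B ** A = mat 1"
  shows "matrix_inv A = B"
proof -
  let ?A' = "matrix_inv A"
  have inv: "A ** ?A' = mat 1 \<and> ?A' ** A = mat 1"
    unfolding matrix_inv_def by (rule someI[of _ B]) (use assms in auto)
  have "?A' = ?A' ** (A ** B)"
    using assms(1) by simp
  also have "\<dots> = (?A' ** A) ** B"
    by (simp add: matrix_mul_assoc)
  finally show ?thesis
    using inv by simp
qed

lemma conj_by_mult:
  assumes "matrix_inv g ** g = mat 1"
  shows "conj_by g (x ** y) = conj_by g x ** conj_by g y"
proof -
  have "conj_by g x ** conj_by g y = g ** x ** (matrix_inv g ** g) ** y ** matrix_inv g"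
    by (simp add: conj_by_def matrix_mul_assoc)
  then show ?thesis
    using assms by (simp add: conj_by_def matrix_mul_assoc)
qed

lemma conj_by_word_eval:
  assumes inverse: "M ** M' = mat 1" "M' ** M = mat 1"
    and "conj_by M (sperm_mat a) = sperm_mat A" "conj_by M (sperm_mat b) = sperm_mat B"
  shows "conj_by M (sperm_mat (word_eval w a b)) = sperm_mat (word_eval w A B)"
proof -
  have "matrix_inv M ** M = mat 1" "conj_by M (mat 1) = mat 1"
    using inverse by (simp_all add: conj_by_def matrix_inv_eqI)
  then show ?thesis
    using assms(3,4)
    by (induction w a b rule: word_eval.induct)
      (simp_all add: sperm_mat_one conj_by_mult flip: sperm_mat_mult)
qed

lemma aut_WD4D:
  assumes "f \<in> aut_WD4"
  shows "f ` WD4 \<subseteq> WD4"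
    and "\<And>x y. x \<in> WD4 \<Longrightarrow> y \<in> WD4 \<Longrightarrow> f (x ** y) = f x ** f y"
    and "inj_on f WD4"
  using assms by (auto simp: aut_WD4_def iso_def hom_def WD4_grp_def bij_betw_def)

lemma aut_WD4I:
  assumes "\<And>x. x \<in> WD4 \<Longrightarrow> f x \<in> WD4"
    and "\<And>x y. x \<in> WD4 \<Longrightarrow> y \<in> WD4 \<Longrightarrow> f (x ** y) = f x ** f y"
    and "bij_betw f WD4 WD4"
  shows "f \<in> aut_WD4"
  using assms by (auto simp: aut_WD4_def iso_def hom_def WD4_grp_def)

lemma matrix_inv_sperm_mat:
  "h \<odot> h' = sperm_one \<Longrightarrow> h' \<odot> h = sperm_one \<Longrightarrow> matrix_inv (sperm_mat h) = sperm_mat h'"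
  by (rule matrix_inv_eqI) (simp_all add: sperm_mat_mult sperm_mat_one)

lemma conj_by_sperm_mat:
  "h \<odot> h' = sperm_one \<Longrightarrow> h' \<odot> h = sperm_one \<Longrightarrow>
    conj_by (sperm_mat h) (sperm_mat z) = sperm_mat (sperm_conj h h' z)"
  by (simp add: conj_by_def matrix_inv_sperm_mat sperm_conj_def sperm_mat_mult)

lemma sperm_conj_cancel: "h \<odot> h' = sperm_one \<Longrightarrow> sperm_conj h h' (sperm_conj h' h z) = z"
  by (simp add: sperm_conj_def sperm_mult_assoc sperm_mult_cancel)

lemma conj_by_sperm_mat_aut:
  assumes inverse: "h \<odot> h' = sperm_one" "h' \<odot> h = sperm_one"
  shows "conj_by (sperm_mat h) \<in> aut_WD4"
proof -
  note conj = conj_by_sperm_mat[OF inverse] conj_by_sperm_mat[OF inverse(2,1)]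
  have "bij_betw (conj_by (sperm_mat h)) WD4 WD4"
  proof (rule bij_betw_byWitness[where f' = "conj_by (sperm_mat h')"])
    show "\<forall>m\<in>WD4. conj_by (sperm_mat h') (conj_by (sperm_mat h) m) = m"
      "\<forall>m\<in>WD4. conj_by (sperm_mat h) (conj_by (sperm_mat h') m) = m"
      "conj_by (sperm_mat h) ` WD4 \<subseteq> WD4" "conj_by (sperm_mat h') ` WD4 \<subseteq> WD4"
      using even_sperm_conj inverse
      by (auto simp: WD4_eq_image_sperm_mat conj sperm_conj_cancel)
  qed
  moreover have "conj_by (sperm_mat h) (x ** y) = conj_by (sperm_mat h) x ** conj_by (sperm_mat h) y" for x y
    by (rule conj_by_mult) (simp add: matrix_inv_sperm_mat[OF inverse] sperm_mat_mult inverse sperm_mat_one)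
  ultimately show ?thesis
    by (auto intro: aut_WD4I dest: bij_betwE)
qed

text \<open>The pattern \<open>SP a b c d\<close> lets the simplifier evaluate these predicates only on concrete
  arguments, and then computes each square once.\<close>

fun sperm_order2 :: "sperm \<Rightarrow> bool" where
  "sperm_order2 (SP a b c d) \<longleftrightarrow>
     SP a b c d \<odot> SP a b c d = sperm_one \<and> SP a b c d \<noteq> sperm_one"

fun sperm_order4 :: "sperm \<Rightarrow> bool" where
  "sperm_order4 (SP a b c d) \<longleftrightarrow> sperm_order2 (SP a b c d \<odot> SP a b c d)"

fun sperm_order3 :: "sperm \<Rightarrow> bool" where
  "sperm_order3 (SP a b c d) \<longleftrightarrow>
     SP a b c d \<odot> (SP a b c d \<odot> SP a b c d) = sperm_one \<and> SP a b c d \<noteq> sperm_one"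

lemma sperm_order4_iff:
  "sperm_order4 z \<longleftrightarrow> (z \<odot> z) \<odot> (z \<odot> z) = sperm_one \<and> z \<odot> z \<noteq> sperm_one"
proof -
  have "sperm_order2 y \<longleftrightarrow> y \<odot> y = sperm_one \<and> y \<noteq> sperm_one" for y
    by (cases y) simp
  then show ?thesis
    by (cases z) (simp only: sperm_order4.simps)
qed

lemma sperm_order3_iff: "sperm_order3 z \<longleftrightarrow> z \<odot> (z \<odot> z) = sperm_one \<and> z \<noteq> sperm_one"
  by (cases z) simp

definition aut_sperm :: "(mat4 \<Rightarrow> mat4) \<Rightarrow> sperm \<Rightarrow> sperm" where
  "aut_sperm f z = inv_into UNIV sperm_mat (f (sperm_mat z))"

context
  fixes f :: "mat4 \<Rightarrow> mat4"
  assumes f: "f \<in> aut_WD4"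
begin

lemma even_sperm_aut_sperm:
  assumes "even_sperm z"
  shows "even_sperm (aut_sperm f z)" and "sperm_mat (aut_sperm f z) = f (sperm_mat z)"
proof -
  have "f (sperm_mat z) \<in> WD4"
    using aut_WD4D(1)[OF f] sperm_mat_in_WD4[OF assms] by blast
  then obtain y where y: "even_sperm y" "f (sperm_mat z) = sperm_mat y"
    by (rule WD4_elem_is_sperm_mat)
  then have "aut_sperm f z = y"
    by (simp add: aut_sperm_def inj_sperm_mat)
  then show "even_sperm (aut_sperm f z)" "sperm_mat (aut_sperm f z) = f (sperm_mat z)"
    using y by auto
qed

lemma aut_sperm_mult:
  assumes "even_sperm x" "even_sperm y"
  shows "aut_sperm f (x \<odot> y) = aut_sperm f x \<odot> aut_sperm f y"
proof (rule injD[OF inj_sperm_mat])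
  have "sperm_mat (aut_sperm f (x \<odot> y)) = f (sperm_mat x ** sperm_mat y)"
    using assms by (simp add: even_sperm_aut_sperm even_sperm_mult sperm_mat_mult)
  also have "\<dots> = f (sperm_mat x) ** f (sperm_mat y)"
    using aut_WD4D(2)[OF f] sperm_mat_in_WD4 assms by blast
  finally show "sperm_mat (aut_sperm f (x \<odot> y)) = sperm_mat (aut_sperm f x \<odot> aut_sperm f y)"
    using assms by (simp add: even_sperm_aut_sperm sperm_mat_mult[symmetric])
qed

lemma aut_sperm_inj:
  assumes "even_sperm x" "even_sperm y" "aut_sperm f x = aut_sperm f y"
  shows "x = y"
proof -
  have "f (sperm_mat x) = f (sperm_mat y)"
    using assms by (metis even_sperm_aut_sperm(2))
  then have "sperm_mat x = sperm_mat y"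
    using aut_WD4D(3)[OF f] sperm_mat_in_WD4 assms(1,2) by (blast dest: inj_onD)
  then show ?thesis
    by (rule injD[OF inj_sperm_mat])
qed

lemma aut_sperm_one: "aut_sperm f sperm_one = sperm_one"
proof (rule idempotent_sperm_eq_one)
  show "bij (sperm_perm (aut_sperm f sperm_one))"
    using even_sperm_aut_sperm(1)[OF even_sperm_one] by (simp add: even_sperm_def)
  show "aut_sperm f sperm_one \<odot> aut_sperm f sperm_one = aut_sperm f sperm_one"
    using aut_sperm_mult[OF even_sperm_one even_sperm_one] by simp
qed

lemma aut_sperm_word_eval:
  assumes "even_sperm a" "even_sperm b"
  shows "aut_sperm f (word_eval w a b) = word_eval w (aut_sperm f a) (aut_sperm f b)"
  using assms
  by (induction w a b rule: word_eval.induct)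
    (simp_all add: aut_sperm_one aut_sperm_mult even_sperm_word_eval)

lemma aut_sperm_eq_one_iff:
  assumes "even_sperm z"
  shows "aut_sperm f z = sperm_one \<longleftrightarrow> z = sperm_one"
  using aut_sperm_inj[OF assms even_sperm_one] aut_sperm_one by auto

lemma sperm_order4_aut_sperm:
  assumes "even_sperm z" "sperm_order4 z"
  shows "sperm_order4 (aut_sperm f z)"
proof -
  have even_sq: "even_sperm (z \<odot> z)"
    using even_sperm_mult[OF assms(1,1)] .
  have sq: "aut_sperm f z \<odot> aut_sperm f z = aut_sperm f (z \<odot> z)"
    using aut_sperm_mult[OF assms(1,1)] by simp
  have "(aut_sperm f z \<odot> aut_sperm f z) \<odot> (aut_sperm f z \<odot> aut_sperm f z)
      = aut_sperm f ((z \<odot> z) \<odot> (z \<odot> z))"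
    using aut_sperm_mult[OF even_sq even_sq] sq by simp
  then show ?thesis
    using assms(2) sq aut_sperm_eq_one_iff[OF even_sq] by (simp add: sperm_order4_iff aut_sperm_one)
qed

lemma sperm_order3_aut_sperm:
  assumes "even_sperm z" "sperm_order3 z"
  shows "sperm_order3 (aut_sperm f z)"
proof -
  have "aut_sperm f z \<odot> (aut_sperm f z \<odot> aut_sperm f z) = aut_sperm f (z \<odot> (z \<odot> z))"
    using assms(1) by (simp add: aut_sperm_mult even_sperm_mult)
  then show ?thesis
    using assms aut_sperm_eq_one_iff[OF assms(1)] by (simp add: sperm_order3_iff aut_sperm_one)
qed

end

section \<open>Generation of \<open>W(D\<^sub>4)\<close> by two elements\<close>

definition gen_a :: sperm where
  "gen_a = SP (Pos I1) (Neg I2) (Neg I4) (Pos I3)"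

definition gen_b :: sperm where
  "gen_b = SP (Pos I2) (Pos I3) (Pos I1) (Pos I4)"

lemma generators:
  "even_sperm gen_a" "even_sperm gen_b" "sperm_order4 gen_a" "sperm_order3 gen_b"
  "sperm_order4 (gen_a \<odot> gen_b)" "sperm_order4 (gen_a \<odot> (gen_b \<odot> gen_b))"
  by (simp_all add: even_sperm_iff sperm_perm_def gen_a_def gen_b_def sperm_one_def)

text \<open>A copy of \<open>list_all\<close> whose congruence rule keeps the simplifier from
  rewriting the (large) predicate before the list has been unfolded.\<close>

definition list_all_lazy :: "('a \<Rightarrow> bool) \<Rightarrow> 'a list \<Rightarrow> bool" where
  "list_all_lazy P xs = list_all P xs"

lemma list_all_lazy_cong [cong]: "xs = ys \<Longrightarrow> list_all_lazy P xs = list_all_lazy P ys"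
  by simp

lemma list_all_lazy_simps [simp]:
  "list_all_lazy P [] = True" "list_all_lazy P (x # xs) = (P x \<and> list_all_lazy P xs)"
  by (simp_all add: list_all_lazy_def)

lemma list_all_lazy_iff: "list_all_lazy P xs \<longleftrightarrow> (\<forall>x\<in>set xs. P x)"
  by (simp add: list_all_lazy_def list_all_iff)

lemma list_all_lazy_memD: "list_all_lazy P xs \<Longrightarrow> x \<in> set xs \<Longrightarrow> P x"
  by (simp add: list_all_lazy_iff)

lemma list_all_lazy_append:
  "list_all_lazy P (xs @ ys) \<longleftrightarrow> list_all_lazy P xs \<and> list_all_lazy P ys"
  by (simp add: list_all_lazy_def)

definition sidx_of :: "bool \<Rightarrow> ix \<Rightarrow> sidx" where
  "sidx_of neg i = (if neg then Neg i else Pos i)"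

fun sidx_is_neg :: "sidx \<Rightarrow> bool" where
  "sidx_is_neg (Pos i) = False"
| "sidx_is_neg (Neg i) = True"

fun sperm_of_lists :: "ix list \<Rightarrow> bool list \<Rightarrow> sperm" where
  "sperm_of_lists [i1, i2, i3, i4] [n1, n2, n3, n4] =
     SP (sidx_of n1 i1) (sidx_of n2 i2) (sidx_of n3 i3) (sidx_of n4 i4)"
| "sperm_of_lists _ _ = sperm_one"

definition perms4 :: "ix list list" where
  "perms4 =
    [[I1, I2, I3, I4],
     [I1, I2, I4, I3],
     [I1, I3, I2, I4],
     [I1, I3, I4, I2],
     [I1, I4, I2, I3],
     [I1, I4, I3, I2],
     [I2, I1, I3, I4],
     [I2, I1, I4, I3],
     [I2, I3, I1, I4],
     [I2, I3, I4, I1],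
     [I2, I4, I1, I3],
     [I2, I4, I3, I1],
     [I3, I1, I2, I4],
     [I3, I1, I4, I2],
     [I3, I2, I1, I4],
     [I3, I2, I4, I1],
     [I3, I4, I1, I2],
     [I3, I4, I2, I1],
     [I4, I1, I2, I3],
     [I4, I1, I3, I2],
     [I4, I2, I1, I3],
     [I4, I2, I3, I1],
     [I4, I3, I1, I2],
     [I4, I3, I2, I1]]"

definition even_signs4 :: "bool list list" where
  "even_signs4 =
    [[False, False, False, False],
     [False, False, True, True],
     [False, True, False, True],
     [False, True, True, False],
     [True, False, False, True],
     [True, False, True, False],
     [True, True, False, False],
     [True, True, True, True]]"

definition word_table :: "(sperm \<times> gen_letter list) list" where
  "word_table =
    [(SP (Pos I1) (Pos I2) (Pos I3) (Pos I4), []),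
     (SP (Pos I1) (Pos I2) (Neg I3) (Neg I4), [GA, GA]),
     (SP (Pos I1) (Neg I2) (Pos I3) (Neg I4), [GB, GB, GA, GA, GB]),
     (SP (Pos I1) (Neg I2) (Neg I3) (Pos I4), [GB, GB, GA, GA, GB, GA, GA]),
     (SP (Neg I1) (Pos I2) (Pos I3) (Neg I4), [GB, GA, GA, GB, GB]),
     (SP (Neg I1) (Pos I2) (Neg I3) (Pos I4), [GB, GA, GA, GB, GB, GA, GA]),
     (SP (Neg I1) (Neg I2) (Pos I3) (Pos I4), [GB, GA, GA, GB, GA, GA, GB]),
     (SP (Neg I1) (Neg I2) (Neg I3) (Neg I4), [GB, GA, GA, GB, GA, GA, GB, GA, GA]),
     (SP (Pos I1) (Pos I2) (Pos I4) (Pos I3), [GB, GB, GA, GA, GB, GA]),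
     (SP (Pos I1) (Pos I2) (Neg I4) (Neg I3), [GA, GB, GB, GA, GA, GB]),
     (SP (Pos I1) (Neg I2) (Pos I4) (Neg I3), [GA, GA, GA]),
     (SP (Pos I1) (Neg I2) (Neg I4) (Pos I3), [GA]),
     (SP (Neg I1) (Pos I2) (Pos I4) (Neg I3), [GB, GA, GB, GA, GA, GA, GB, GA, GB]),
     (SP (Neg I1) (Pos I2) (Neg I4) (Pos I3), [GB, GA, GA, GB, GA, GA, GB, GA]),
     (SP (Neg I1) (Neg I2) (Pos I4) (Pos I3), [GB, GA, GA, GB, GB, GA]),
     (SP (Neg I1) (Neg I2) (Neg I4) (Neg I3), [GA, GB, GA, GA, GB, GB]),
     (SP (Pos I1) (Pos I3) (Pos I2) (Pos I4), [GB, GA, GB, GA, GA, GA, GB, GB, GA]),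
     (SP (Pos I1) (Pos I3) (Neg I2) (Neg I4), [GB, GA, GB, GB, GA, GB, GA, GB]),
     (SP (Pos I1) (Neg I3) (Pos I2) (Neg I4), [GA, GB, GA, GA, GB, GA, GB, GA]),
     (SP (Pos I1) (Neg I3) (Neg I2) (Pos I4), [GB, GB, GA, GB, GA, GB, GB, GA, GB]),
     (SP (Neg I1) (Pos I3) (Pos I2) (Neg I4), [GA, GB, GB, GA, GB, GA]),
     (SP (Neg I1) (Pos I3) (Neg I2) (Pos I4), [GB, GA, GB, GA, GB, GB, GA]),
     (SP (Neg I1) (Neg I3) (Pos I2) (Pos I4), [GA, GA, GA, GB, GB, GA, GB, GA]),
     (SP (Neg I1) (Neg I3) (Neg I2) (Neg I4), [GA, GB, GB, GA, GA, GA, GB, GA]),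
     (SP (Pos I1) (Pos I3) (Pos I4) (Pos I2), [GA, GB, GA, GA, GB, GA, GB, GA, GA]),
     (SP (Pos I1) (Pos I3) (Neg I4) (Neg I2), [GA, GB, GA, GA, GB, GA, GB]),
     (SP (Pos I1) (Neg I3) (Pos I4) (Neg I2), [GB, GA, GB, GA, GA, GA, GB, GB]),
     (SP (Pos I1) (Neg I3) (Neg I4) (Pos I2), [GB, GA, GA, GA, GB, GA, GB, GB]),
     (SP (Neg I1) (Pos I3) (Pos I4) (Neg I2), [GA, GA, GA, GB, GB, GA, GB]),
     (SP (Neg I1) (Pos I3) (Neg I4) (Pos I2), [GA, GB, GB, GA, GA, GA, GB]),
     (SP (Neg I1) (Neg I3) (Pos I4) (Pos I2), [GB, GA, GB, GA, GB, GB]),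
     (SP (Neg I1) (Neg I3) (Neg I4) (Neg I2), [GA, GB, GB, GA, GB]),
     (SP (Pos I1) (Pos I4) (Pos I2) (Pos I3), [GB, GA, GA, GB, GA, GA, GA, GB, GA]),
     (SP (Pos I1) (Pos I4) (Neg I2) (Neg I3), [GA, GA, GB, GA, GA, GB, GA, GB, GA]),
     (SP (Pos I1) (Neg I4) (Pos I2) (Neg I3), [GB, GA, GA, GB, GA, GB, GA, GA, GA]),
     (SP (Pos I1) (Neg I4) (Neg I2) (Pos I3), [GB, GA, GA, GB, GA, GB, GA]),
     (SP (Neg I1) (Pos I4) (Pos I2) (Neg I3), [GB, GB, GA, GB, GA, GA, GA]),
     (SP (Neg I1) (Pos I4) (Neg I2) (Pos I3), [GB, GB, GA, GB, GA]),
     (SP (Neg I1) (Neg I4) (Pos I2) (Pos I3), [GB, GB, GA, GA, GA, GB, GA]),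
     (SP (Neg I1) (Neg I4) (Neg I2) (Neg I3), [GA, GA, GB, GB, GA, GB, GA]),
     (SP (Pos I1) (Pos I4) (Pos I3) (Pos I2), [GB, GA, GA, GB, GA, GB]),
     (SP (Pos I1) (Pos I4) (Neg I3) (Neg I2), [GB, GA, GA, GB, GA, GB, GA, GA]),
     (SP (Pos I1) (Neg I4) (Pos I3) (Neg I2), [GB, GA, GA, GB, GA, GA, GA, GB]),
     (SP (Pos I1) (Neg I4) (Neg I3) (Pos I2), [GA, GA, GB, GA, GA, GB, GA, GB]),
     (SP (Neg I1) (Pos I4) (Pos I3) (Neg I2), [GB, GB, GA, GA, GA, GB]),
     (SP (Neg I1) (Pos I4) (Neg I3) (Pos I2), [GA, GA, GB, GB, GA, GB]),
     (SP (Neg I1) (Neg I4) (Pos I3) (Pos I2), [GB, GB, GA, GB]),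
     (SP (Neg I1) (Neg I4) (Neg I3) (Neg I2), [GB, GB, GA, GB, GA, GA]),
     (SP (Pos I2) (Pos I1) (Pos I3) (Pos I4), [GA, GB, GA, GA, GA, GB, GB, GA, GB]),
     (SP (Pos I2) (Pos I1) (Neg I3) (Neg I4), [GA, GB, GA, GB, GB, GA, GA, GA, GB]),
     (SP (Pos I2) (Neg I1) (Pos I3) (Neg I4), [GA, GB, GB, GA, GB, GA, GB, GB]),
     (SP (Pos I2) (Neg I1) (Neg I3) (Pos I4), [GA, GB, GA, GB, GB, GA, GB]),
     (SP (Neg I2) (Pos I1) (Pos I3) (Neg I4), [GB, GA, GB, GB, GA, GB, GA]),
     (SP (Neg I2) (Pos I1) (Neg I3) (Pos I4), [GB, GB, GA, GB, GA, GB, GB, GA]),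
     (SP (Neg I2) (Neg I1) (Pos I3) (Pos I4), [GB, GA, GA, GA, GB, GB, GA, GB, GA]),
     (SP (Neg I2) (Neg I1) (Neg I3) (Neg I4), [GB, GA, GB, GB, GA, GA, GA, GB, GA]),
     (SP (Pos I2) (Pos I1) (Pos I4) (Pos I3), [GA, GB, GB, GA, GB, GA, GB, GB, GA]),
     (SP (Pos I2) (Pos I1) (Neg I4) (Neg I3), [GA, GB, GA, GB, GB, GA, GB, GA]),
     (SP (Pos I2) (Neg I1) (Pos I4) (Neg I3), [GB, GB, GA, GB, GA, GA, GA, GB, GB]),
     (SP (Pos I2) (Neg I1) (Neg I4) (Pos I3), [GB, GB, GA, GA, GA, GB, GA, GB, GB]),
     (SP (Neg I2) (Pos I1) (Pos I4) (Neg I3), [GB, GA, GA, GA, GB, GB, GA, GB]),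
     (SP (Neg I2) (Pos I1) (Neg I4) (Pos I3), [GB, GA, GB, GB, GA, GA, GA, GB]),
     (SP (Neg I2) (Neg I1) (Pos I4) (Pos I3), [GB, GB, GA, GB, GA, GB, GB]),
     (SP (Neg I2) (Neg I1) (Neg I4) (Neg I3), [GB, GA, GB, GB, GA, GB]),
     (SP (Pos I2) (Pos I3) (Pos I1) (Pos I4), [GB]),
     (SP (Pos I2) (Pos I3) (Neg I1) (Neg I4), [GB, GA, GA]),
     (SP (Pos I2) (Neg I3) (Pos I1) (Neg I4), [GA, GA, GB]),
     (SP (Pos I2) (Neg I3) (Neg I1) (Pos I4), [GA, GA, GB, GA, GA]),
     (SP (Neg I2) (Pos I3) (Pos I1) (Neg I4), [GB, GB, GA, GA, GB, GB]),
     (SP (Neg I2) (Pos I3) (Neg I1) (Pos I4), [GB, GB, GA, GA, GB, GB, GA, GA]),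
     (SP (Neg I2) (Neg I3) (Pos I1) (Pos I4), [GB, GB, GA, GA, GB, GA, GA, GB]),
     (SP (Neg I2) (Neg I3) (Neg I1) (Neg I4), [GB, GB, GA, GA, GB, GA, GA, GB, GA, GA]),
     (SP (Pos I2) (Pos I3) (Pos I4) (Pos I1), [GA, GA, GB, GA]),
     (SP (Pos I2) (Pos I3) (Neg I4) (Neg I1), [GA, GA, GB, GA, GA, GA]),
     (SP (Pos I2) (Neg I3) (Pos I4) (Neg I1), [GB, GA, GA, GA]),
     (SP (Pos I2) (Neg I3) (Neg I4) (Pos I1), [GB, GA]),
     (SP (Neg I2) (Pos I3) (Pos I4) (Neg I1), [GA, GA, GB, GA, GB, GA, GA, GB, GB]),
     (SP (Neg I2) (Pos I3) (Neg I4) (Pos I1), [GB, GB, GA, GA, GB, GA, GA, GB, GA]),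
     (SP (Neg I2) (Neg I3) (Pos I4) (Pos I1), [GB, GB, GA, GA, GB, GB, GA]),
     (SP (Neg I2) (Neg I3) (Neg I4) (Neg I1), [GB, GA, GB, GA, GA, GB, GB]),
     (SP (Pos I2) (Pos I4) (Pos I1) (Pos I3), [GB, GB, GA, GA, GB, GA, GB]),
     (SP (Pos I2) (Pos I4) (Neg I1) (Neg I3), [GB, GB, GA, GA, GB, GA, GB, GA, GA]),
     (SP (Pos I2) (Neg I4) (Pos I1) (Neg I3), [GA, GB, GB, GA, GA, GB, GB]),
     (SP (Pos I2) (Neg I4) (Neg I1) (Pos I3), [GA, GB, GB, GA, GA, GB, GB, GA, GA]),
     (SP (Neg I2) (Pos I4) (Pos I1) (Neg I3), [GA, GA, GA, GB]),
     (SP (Neg I2) (Pos I4) (Neg I1) (Pos I3), [GA, GA, GA, GB, GA, GA]),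
     (SP (Neg I2) (Neg I4) (Pos I1) (Pos I3), [GA, GB]),
     (SP (Neg I2) (Neg I4) (Neg I1) (Neg I3), [GA, GB, GA, GA]),
     (SP (Pos I2) (Pos I4) (Pos I3) (Pos I1), [GA, GB, GB, GA, GA, GB, GB, GA]),
     (SP (Pos I2) (Pos I4) (Neg I3) (Neg I1), [GA, GB, GA, GB, GA, GA, GB, GB]),
     (SP (Pos I2) (Neg I4) (Pos I3) (Neg I1), [GB, GB, GA, GA, GB, GA, GB, GA, GA, GA]),
     (SP (Pos I2) (Neg I4) (Neg I3) (Pos I1), [GB, GB, GA, GA, GB, GA, GB, GA]),
     (SP (Neg I2) (Pos I4) (Pos I3) (Neg I1), [GA, GB, GA, GA, GA]),
     (SP (Neg I2) (Pos I4) (Neg I3) (Pos I1), [GA, GB, GA]),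
     (SP (Neg I2) (Neg I4) (Pos I3) (Pos I1), [GA, GA, GA, GB, GA]),
     (SP (Neg I2) (Neg I4) (Neg I3) (Neg I1), [GA, GA, GA, GB, GA, GA, GA]),
     (SP (Pos I3) (Pos I1) (Pos I2) (Pos I4), [GB, GB]),
     (SP (Pos I3) (Pos I1) (Neg I2) (Neg I4), [GB, GB, GA, GA]),
     (SP (Pos I3) (Neg I1) (Pos I2) (Neg I4), [GB, GA, GA, GB]),
     (SP (Pos I3) (Neg I1) (Neg I2) (Pos I4), [GB, GA, GA, GB, GA, GA]),
     (SP (Neg I3) (Pos I1) (Pos I2) (Neg I4), [GA, GA, GB, GB]),
     (SP (Neg I3) (Pos I1) (Neg I2) (Pos I4), [GA, GA, GB, GB, GA, GA]),
     (SP (Neg I3) (Neg I1) (Pos I2) (Pos I4), [GA, GA, GB, GA, GA, GB]),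
     (SP (Neg I3) (Neg I1) (Neg I2) (Neg I4), [GA, GA, GB, GA, GA, GB, GA, GA]),
     (SP (Pos I3) (Pos I1) (Pos I4) (Pos I2), [GB, GA, GA, GB, GA]),
     (SP (Pos I3) (Pos I1) (Neg I4) (Neg I2), [GB, GA, GA, GB, GA, GA, GA]),
     (SP (Pos I3) (Neg I1) (Pos I4) (Neg I2), [GB, GB, GA, GA, GA]),
     (SP (Pos I3) (Neg I1) (Neg I4) (Pos I2), [GB, GB, GA]),
     (SP (Neg I3) (Pos I1) (Pos I4) (Neg I2), [GA, GB, GA, GA, GA, GB, GA, GB]),
     (SP (Neg I3) (Pos I1) (Neg I4) (Pos I2), [GA, GA, GB, GA, GA, GB, GA]),
     (SP (Neg I3) (Neg I1) (Pos I4) (Pos I2), [GA, GA, GB, GB, GA]),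
     (SP (Neg I3) (Neg I1) (Neg I4) (Neg I2), [GA, GA, GB, GB, GA, GA, GA]),
     (SP (Pos I3) (Pos I2) (Pos I1) (Pos I4), [GA, GB, GA, GA, GA, GB, GB, GA]),
     (SP (Pos I3) (Pos I2) (Neg I1) (Neg I4), [GA, GB, GB, GA, GB, GA, GB]),
     (SP (Pos I3) (Neg I2) (Pos I1) (Neg I4), [GB, GA, GB, GB, GA, GB, GA, GB, GB]),
     (SP (Pos I3) (Neg I2) (Neg I1) (Pos I4), [GB, GA, GB, GA, GB, GB, GA, GB]),
     (SP (Neg I3) (Pos I2) (Pos I1) (Neg I4), [GA, GB, GA, GB, GB, GA, GA, GA]),
     (SP (Neg I3) (Pos I2) (Neg I1) (Pos I4), [GA, GB, GA, GB, GB, GA]),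
     (SP (Neg I3) (Neg I2) (Pos I1) (Pos I4), [GA, GB, GA, GB, GA, GA, GB, GA]),
     (SP (Neg I3) (Neg I2) (Neg I1) (Neg I4), [GA, GB, GB, GA, GA, GA, GB, GA, GB]),
     (SP (Pos I3) (Pos I2) (Pos I4) (Pos I1), [GA, GB, GA, GA, GA, GB, GA, GA, GB]),
     (SP (Pos I3) (Pos I2) (Neg I4) (Neg I1), [GB, GA, GB, GA, GB, GB, GA, GB, GA]),
     (SP (Pos I3) (Neg I2) (Pos I4) (Neg I1), [GA, GB, GA, GA, GA, GB, GB]),
     (SP (Pos I3) (Neg I2) (Neg I4) (Pos I1), [GA, GA, GA, GB, GA, GB, GB]),
     (SP (Neg I3) (Pos I2) (Pos I4) (Neg I1), [GA, GB, GA, GB, GA, GA, GB]),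
     (SP (Neg I3) (Pos I2) (Neg I4) (Pos I1), [GA, GB, GA, GB, GA, GA, GB, GA, GA]),
     (SP (Neg I3) (Neg I2) (Pos I4) (Pos I1), [GA, GB, GA, GB, GB]),
     (SP (Neg I3) (Neg I2) (Neg I4) (Neg I1), [GA, GB, GA, GB, GB, GA, GA]),
     (SP (Pos I3) (Pos I4) (Pos I1) (Pos I2), [GA, GA, GB, GA, GA, GA, GB, GA]),
     (SP (Pos I3) (Pos I4) (Neg I1) (Neg I2), [GA, GA, GA, GB, GB, GA, GB, GB]),
     (SP (Pos I3) (Neg I4) (Pos I1) (Neg I2), [GA, GA, GB, GA, GB, GA, GA, GA]),
     (SP (Pos I3) (Neg I4) (Neg I1) (Pos I2), [GA, GA, GB, GA, GB, GA]),
     (SP (Neg I3) (Pos I4) (Pos I1) (Neg I2), [GB, GA, GB, GA, GA, GA]),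
     (SP (Neg I3) (Pos I4) (Neg I1) (Pos I2), [GB, GA, GB, GA]),
     (SP (Neg I3) (Neg I4) (Pos I1) (Pos I2), [GB, GA, GA, GA, GB, GA]),
     (SP (Neg I3) (Neg I4) (Neg I1) (Neg I2), [GA, GB, GB, GA, GB, GB]),
     (SP (Pos I3) (Pos I4) (Pos I2) (Pos I1), [GA, GA, GB, GA, GB]),
     (SP (Pos I3) (Pos I4) (Neg I2) (Neg I1), [GA, GA, GB, GA, GB, GA, GA]),
     (SP (Pos I3) (Neg I4) (Pos I2) (Neg I1), [GA, GA, GB, GA, GA, GA, GB]),
     (SP (Pos I3) (Neg I4) (Neg I2) (Pos I1), [GA, GA, GB, GA, GA, GA, GB, GA, GA]),
     (SP (Neg I3) (Pos I4) (Pos I2) (Neg I1), [GB, GA, GA, GA, GB]),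
     (SP (Neg I3) (Pos I4) (Neg I2) (Pos I1), [GB, GA, GA, GA, GB, GA, GA]),
     (SP (Neg I3) (Neg I4) (Pos I2) (Pos I1), [GB, GA, GB]),
     (SP (Neg I3) (Neg I4) (Neg I2) (Neg I1), [GB, GA, GB, GA, GA]),
     (SP (Pos I4) (Pos I1) (Pos I2) (Pos I3), [GA, GA, GA, GB, GB, GA, GA]),
     (SP (Pos I4) (Pos I1) (Neg I2) (Neg I3), [GA, GA, GA, GB, GB]),
     (SP (Pos I4) (Neg I1) (Pos I2) (Neg I3), [GB, GA, GB, GA, GA, GA, GB, GA]),
     (SP (Pos I4) (Neg I1) (Neg I2) (Pos I3), [GA, GA, GA, GB, GA, GA, GB]),
     (SP (Neg I4) (Pos I1) (Pos I2) (Neg I3), [GA, GB, GB, GA, GA]),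
     (SP (Neg I4) (Pos I1) (Neg I2) (Pos I3), [GA, GB, GB]),
     (SP (Neg I4) (Neg I1) (Pos I2) (Pos I3), [GA, GB, GA, GA, GB, GA, GA]),
     (SP (Neg I4) (Neg I1) (Neg I2) (Neg I3), [GA, GB, GA, GA, GB]),
     (SP (Pos I4) (Pos I1) (Pos I3) (Pos I2), [GB, GA, GB, GA, GA, GA, GB, GA, GA]),
     (SP (Pos I4) (Pos I1) (Neg I3) (Neg I2), [GB, GA, GB, GA, GA, GA, GB]),
     (SP (Pos I4) (Neg I1) (Pos I3) (Neg I2), [GA, GA, GA, GB, GB, GA]),
     (SP (Pos I4) (Neg I1) (Neg I3) (Pos I2), [GB, GA, GB, GA, GB]),
     (SP (Neg I4) (Pos I1) (Pos I3) (Neg I2), [GA, GB, GA, GA, GB, GA]),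
     (SP (Neg I4) (Pos I1) (Neg I3) (Pos I2), [GB, GA, GA, GA, GB, GA, GB]),
     (SP (Neg I4) (Neg I1) (Pos I3) (Pos I2), [GA, GB, GB, GA, GA, GA]),
     (SP (Neg I4) (Neg I1) (Neg I3) (Neg I2), [GA, GB, GB, GA]),
     (SP (Pos I4) (Pos I2) (Pos I1) (Pos I3), [GA, GA, GB, GA, GB, GA, GA, GB, GA]),
     (SP (Pos I4) (Pos I2) (Neg I1) (Neg I3), [GB, GB, GA, GB, GA, GA, GA, GB]),
     (SP (Pos I4) (Neg I2) (Pos I1) (Neg I3), [GB, GA, GA, GA, GB, GB, GA]),
     (SP (Pos I4) (Neg I2) (Neg I1) (Pos I3), [GB, GB, GA, GB, GA, GB]),
     (SP (Neg I4) (Pos I2) (Pos I1) (Neg I3), [GB, GA, GB, GA, GA, GB, GA]),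
     (SP (Neg I4) (Pos I2) (Neg I1) (Pos I3), [GB, GB, GA, GA, GA, GB, GA, GB]),
     (SP (Neg I4) (Neg I2) (Pos I1) (Pos I3), [GB, GA, GB, GB, GA, GA, GA]),
     (SP (Neg I4) (Neg I2) (Neg I1) (Neg I3), [GB, GA, GB, GB, GA]),
     (SP (Pos I4) (Pos I2) (Pos I3) (Pos I1), [GA, GA, GB, GA, GB, GB]),
     (SP (Pos I4) (Pos I2) (Neg I3) (Neg I1), [GB, GA, GA, GA, GB, GB]),
     (SP (Pos I4) (Neg I2) (Pos I3) (Neg I1), [GA, GA, GB, GA, GB, GA, GA, GB]),
     (SP (Pos I4) (Neg I2) (Neg I3) (Pos I1), [GB, GA, GA, GA, GB, GA, GA, GB]),
     (SP (Neg I4) (Pos I2) (Pos I3) (Neg I1), [GB, GA, GB, GB, GA, GA]),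
     (SP (Neg I4) (Pos I2) (Neg I3) (Pos I1), [GB, GA, GB, GB]),
     (SP (Neg I4) (Neg I2) (Pos I3) (Pos I1), [GB, GA, GB, GA, GA, GB, GA, GA]),
     (SP (Neg I4) (Neg I2) (Neg I3) (Neg I1), [GB, GA, GB, GA, GA, GB]),
     (SP (Pos I4) (Pos I3) (Pos I1) (Pos I2), [GA, GB, GA, GB, GA, GA, GA]),
     (SP (Pos I4) (Pos I3) (Neg I1) (Neg I2), [GA, GB, GA, GB, GA]),
     (SP (Pos I4) (Neg I3) (Pos I1) (Neg I2), [GA, GB, GA, GA, GA, GB, GA]),
     (SP (Pos I4) (Neg I3) (Neg I1) (Pos I2), [GA, GA, GB, GB, GA, GB, GB]),
     (SP (Neg I4) (Pos I3) (Pos I1) (Neg I2), [GB, GB, GA, GB, GB, GA, GA]),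
     (SP (Neg I4) (Pos I3) (Neg I1) (Pos I2), [GB, GB, GA, GB, GB]),
     (SP (Neg I4) (Neg I3) (Pos I1) (Pos I2), [GA, GA, GA, GB, GA, GB, GA, GA, GA]),
     (SP (Neg I4) (Neg I3) (Neg I1) (Neg I2), [GA, GA, GA, GB, GA, GB, GA]),
     (SP (Pos I4) (Pos I3) (Pos I2) (Pos I1), [GA, GB, GA, GA, GA, GB, GA, GA]),
     (SP (Pos I4) (Pos I3) (Neg I2) (Neg I1), [GA, GB, GA, GA, GA, GB]),
     (SP (Pos I4) (Neg I3) (Pos I2) (Neg I1), [GA, GB, GA, GB, GA, GA]),
     (SP (Pos I4) (Neg I3) (Neg I2) (Pos I1), [GA, GB, GA, GB]),
     (SP (Neg I4) (Pos I3) (Pos I2) (Neg I1), [GA, GA, GA, GB, GA, GB, GA, GA]),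
     (SP (Neg I4) (Pos I3) (Neg I2) (Pos I1), [GA, GA, GA, GB, GA, GB]),
     (SP (Neg I4) (Neg I3) (Pos I2) (Pos I1), [GB, GB, GA, GB, GB, GA, GA, GA]),
     (SP (Neg I4) (Neg I3) (Neg I2) (Neg I1), [GB, GB, GA, GB, GB, GA])]"

definition order4_table_1 :: "(sperm \<times> gen_letter list) list" where
  "order4_table_1 =
    [(SP (Pos I1) (Neg I2) (Pos I4) (Neg I3), [GA, GA, GA]),
     (SP (Pos I1) (Neg I2) (Neg I4) (Pos I3), [GA]),
     (SP (Neg I1) (Pos I2) (Pos I4) (Neg I3), [GB, GA, GB, GA, GA, GA, GB, GA, GB]),
     (SP (Neg I1) (Pos I2) (Neg I4) (Pos I3), [GB, GA, GA, GB, GA, GA, GB, GA]),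
     (SP (Pos I1) (Pos I3) (Neg I2) (Neg I4), [GB, GA, GB, GB, GA, GB, GA, GB]),
     (SP (Pos I1) (Neg I3) (Pos I2) (Neg I4), [GA, GB, GA, GA, GB, GA, GB, GA]),
     (SP (Neg I1) (Pos I3) (Neg I2) (Pos I4), [GB, GA, GB, GA, GB, GB, GA]),
     (SP (Neg I1) (Neg I3) (Pos I2) (Pos I4), [GA, GA, GA, GB, GB, GA, GB, GA]),
     (SP (Pos I1) (Pos I4) (Neg I3) (Neg I2), [GB, GA, GA, GB, GA, GB, GA, GA]),
     (SP (Pos I1) (Neg I4) (Neg I3) (Pos I2), [GA, GA, GB, GA, GA, GB, GA, GB]),
     (SP (Neg I1) (Pos I4) (Pos I3) (Neg I2), [GB, GB, GA, GA, GA, GB]),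
     (SP (Neg I1) (Neg I4) (Pos I3) (Pos I2), [GB, GB, GA, GB]),
     (SP (Pos I2) (Neg I1) (Pos I3) (Neg I4), [GA, GB, GB, GA, GB, GA, GB, GB]),
     (SP (Pos I2) (Neg I1) (Neg I3) (Pos I4), [GA, GB, GA, GB, GB, GA, GB]),
     (SP (Neg I2) (Pos I1) (Pos I3) (Neg I4), [GB, GA, GB, GB, GA, GB, GA]),
     (SP (Neg I2) (Pos I1) (Neg I3) (Pos I4), [GB, GB, GA, GB, GA, GB, GB, GA]),
     (SP (Pos I2) (Neg I1) (Pos I4) (Neg I3), [GB, GB, GA, GB, GA, GA, GA, GB, GB]),
     (SP (Pos I2) (Neg I1) (Neg I4) (Pos I3), [GB, GB, GA, GA, GA, GB, GA, GB, GB]),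
     (SP (Neg I2) (Pos I1) (Pos I4) (Neg I3), [GB, GA, GA, GA, GB, GB, GA, GB]),
     (SP (Neg I2) (Pos I1) (Neg I4) (Pos I3), [GB, GA, GB, GB, GA, GA, GA, GB]),
     (SP (Pos I2) (Pos I3) (Pos I4) (Pos I1), [GA, GA, GB, GA])]"

definition order4_table_2 :: "(sperm \<times> gen_letter list) list" where
  "order4_table_2 =
    [(SP (Pos I2) (Pos I3) (Neg I4) (Neg I1), [GA, GA, GB, GA, GA, GA]),
     (SP (Pos I2) (Neg I3) (Pos I4) (Neg I1), [GB, GA, GA, GA]),
     (SP (Pos I2) (Neg I3) (Neg I4) (Pos I1), [GB, GA]),
     (SP (Neg I2) (Pos I3) (Pos I4) (Neg I1), [GA, GA, GB, GA, GB, GA, GA, GB, GB]),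
     (SP (Neg I2) (Pos I3) (Neg I4) (Pos I1), [GB, GB, GA, GA, GB, GA, GA, GB, GA]),
     (SP (Neg I2) (Neg I3) (Pos I4) (Pos I1), [GB, GB, GA, GA, GB, GB, GA]),
     (SP (Neg I2) (Neg I3) (Neg I4) (Neg I1), [GB, GA, GB, GA, GA, GB, GB]),
     (SP (Pos I2) (Pos I4) (Pos I1) (Pos I3), [GB, GB, GA, GA, GB, GA, GB]),
     (SP (Pos I2) (Pos I4) (Neg I1) (Neg I3), [GB, GB, GA, GA, GB, GA, GB, GA, GA]),
     (SP (Pos I2) (Neg I4) (Pos I1) (Neg I3), [GA, GB, GB, GA, GA, GB, GB]),
     (SP (Pos I2) (Neg I4) (Neg I1) (Pos I3), [GA, GB, GB, GA, GA, GB, GB, GA, GA]),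
     (SP (Neg I2) (Pos I4) (Pos I1) (Neg I3), [GA, GA, GA, GB]),
     (SP (Neg I2) (Pos I4) (Neg I1) (Pos I3), [GA, GA, GA, GB, GA, GA]),
     (SP (Neg I2) (Neg I4) (Pos I1) (Pos I3), [GA, GB]),
     (SP (Neg I2) (Neg I4) (Neg I1) (Neg I3), [GA, GB, GA, GA]),
     (SP (Pos I3) (Pos I1) (Pos I4) (Pos I2), [GB, GA, GA, GB, GA]),
     (SP (Pos I3) (Pos I1) (Neg I4) (Neg I2), [GB, GA, GA, GB, GA, GA, GA]),
     (SP (Pos I3) (Neg I1) (Pos I4) (Neg I2), [GB, GB, GA, GA, GA]),
     (SP (Pos I3) (Neg I1) (Neg I4) (Pos I2), [GB, GB, GA]),
     (SP (Neg I3) (Pos I1) (Pos I4) (Neg I2), [GA, GB, GA, GA, GA, GB, GA, GB]),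
     (SP (Neg I3) (Pos I1) (Neg I4) (Pos I2), [GA, GA, GB, GA, GA, GB, GA])]"

definition order4_table_3 :: "(sperm \<times> gen_letter list) list" where
  "order4_table_3 =
    [(SP (Neg I3) (Neg I1) (Pos I4) (Pos I2), [GA, GA, GB, GB, GA]),
     (SP (Neg I3) (Neg I1) (Neg I4) (Neg I2), [GA, GA, GB, GB, GA, GA, GA]),
     (SP (Pos I3) (Pos I2) (Neg I1) (Neg I4), [GA, GB, GB, GA, GB, GA, GB]),
     (SP (Pos I3) (Neg I2) (Neg I1) (Pos I4), [GB, GA, GB, GA, GB, GB, GA, GB]),
     (SP (Neg I3) (Pos I2) (Pos I1) (Neg I4), [GA, GB, GA, GB, GB, GA, GA, GA]),
     (SP (Neg I3) (Neg I2) (Pos I1) (Pos I4), [GA, GB, GA, GB, GA, GA, GB, GA]),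
     (SP (Pos I3) (Pos I4) (Neg I1) (Neg I2), [GA, GA, GA, GB, GB, GA, GB, GB]),
     (SP (Pos I3) (Neg I4) (Neg I1) (Pos I2), [GA, GA, GB, GA, GB, GA]),
     (SP (Neg I3) (Pos I4) (Pos I1) (Neg I2), [GB, GA, GB, GA, GA, GA]),
     (SP (Neg I3) (Neg I4) (Pos I1) (Pos I2), [GB, GA, GA, GA, GB, GA]),
     (SP (Pos I3) (Pos I4) (Pos I2) (Pos I1), [GA, GA, GB, GA, GB]),
     (SP (Pos I3) (Pos I4) (Neg I2) (Neg I1), [GA, GA, GB, GA, GB, GA, GA]),
     (SP (Pos I3) (Neg I4) (Pos I2) (Neg I1), [GA, GA, GB, GA, GA, GA, GB]),
     (SP (Pos I3) (Neg I4) (Neg I2) (Pos I1), [GA, GA, GB, GA, GA, GA, GB, GA, GA]),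
     (SP (Neg I3) (Pos I4) (Pos I2) (Neg I1), [GB, GA, GA, GA, GB]),
     (SP (Neg I3) (Pos I4) (Neg I2) (Pos I1), [GB, GA, GA, GA, GB, GA, GA]),
     (SP (Neg I3) (Neg I4) (Pos I2) (Pos I1), [GB, GA, GB]),
     (SP (Neg I3) (Neg I4) (Neg I2) (Neg I1), [GB, GA, GB, GA, GA]),
     (SP (Pos I4) (Pos I1) (Pos I2) (Pos I3), [GA, GA, GA, GB, GB, GA, GA]),
     (SP (Pos I4) (Pos I1) (Neg I2) (Neg I3), [GA, GA, GA, GB, GB]),
     (SP (Pos I4) (Neg I1) (Pos I2) (Neg I3), [GB, GA, GB, GA, GA, GA, GB, GA])]"

definition order4_table_4 :: "(sperm \<times> gen_letter list) list" where
  "order4_table_4 =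
    [(SP (Pos I4) (Neg I1) (Neg I2) (Pos I3), [GA, GA, GA, GB, GA, GA, GB]),
     (SP (Neg I4) (Pos I1) (Pos I2) (Neg I3), [GA, GB, GB, GA, GA]),
     (SP (Neg I4) (Pos I1) (Neg I2) (Pos I3), [GA, GB, GB]),
     (SP (Neg I4) (Neg I1) (Pos I2) (Pos I3), [GA, GB, GA, GA, GB, GA, GA]),
     (SP (Neg I4) (Neg I1) (Neg I2) (Neg I3), [GA, GB, GA, GA, GB]),
     (SP (Pos I4) (Pos I2) (Neg I3) (Neg I1), [GB, GA, GA, GA, GB, GB]),
     (SP (Pos I4) (Neg I2) (Pos I3) (Neg I1), [GA, GA, GB, GA, GB, GA, GA, GB]),
     (SP (Neg I4) (Pos I2) (Neg I3) (Pos I1), [GB, GA, GB, GB]),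
     (SP (Neg I4) (Neg I2) (Pos I3) (Pos I1), [GB, GA, GB, GA, GA, GB, GA, GA]),
     (SP (Pos I4) (Pos I3) (Pos I1) (Pos I2), [GA, GB, GA, GB, GA, GA, GA]),
     (SP (Pos I4) (Pos I3) (Neg I1) (Neg I2), [GA, GB, GA, GB, GA]),
     (SP (Pos I4) (Neg I3) (Pos I1) (Neg I2), [GA, GB, GA, GA, GA, GB, GA]),
     (SP (Pos I4) (Neg I3) (Neg I1) (Pos I2), [GA, GA, GB, GB, GA, GB, GB]),
     (SP (Neg I4) (Pos I3) (Pos I1) (Neg I2), [GB, GB, GA, GB, GB, GA, GA]),
     (SP (Neg I4) (Pos I3) (Neg I1) (Pos I2), [GB, GB, GA, GB, GB]),
     (SP (Neg I4) (Neg I3) (Pos I1) (Pos I2), [GA, GA, GA, GB, GA, GB, GA, GA, GA]),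
     (SP (Neg I4) (Neg I3) (Neg I1) (Neg I2), [GA, GA, GA, GB, GA, GB, GA]),
     (SP (Pos I4) (Pos I3) (Neg I2) (Neg I1), [GA, GB, GA, GA, GA, GB]),
     (SP (Pos I4) (Neg I3) (Pos I2) (Neg I1), [GA, GB, GA, GB, GA, GA]),
     (SP (Neg I4) (Pos I3) (Neg I2) (Pos I1), [GA, GA, GA, GB, GA, GB]),
     (SP (Neg I4) (Neg I3) (Pos I2) (Pos I1), [GB, GB, GA, GB, GB, GA, GA, GA])]"

definition order4_table :: "(sperm \<times> gen_letter list) list" where
  "order4_table = order4_table_1 @ order4_table_2 @ order4_table_3 @ order4_table_4"

definition order3_table :: "(sperm \<times> gen_letter list) list" where
  "order3_table =
    [(SP (Pos I1) (Pos I3) (Pos I4) (Pos I2), [GA, GB, GA, GA, GB, GA, GB, GA, GA]),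
     (SP (Pos I1) (Pos I3) (Neg I4) (Neg I2), [GA, GB, GA, GA, GB, GA, GB]),
     (SP (Pos I1) (Neg I3) (Pos I4) (Neg I2), [GB, GA, GB, GA, GA, GA, GB, GB]),
     (SP (Pos I1) (Neg I3) (Neg I4) (Pos I2), [GB, GA, GA, GA, GB, GA, GB, GB]),
     (SP (Pos I1) (Pos I4) (Pos I2) (Pos I3), [GB, GA, GA, GB, GA, GA, GA, GB, GA]),
     (SP (Pos I1) (Pos I4) (Neg I2) (Neg I3), [GA, GA, GB, GA, GA, GB, GA, GB, GA]),
     (SP (Pos I1) (Neg I4) (Pos I2) (Neg I3), [GB, GA, GA, GB, GA, GB, GA, GA, GA]),
     (SP (Pos I1) (Neg I4) (Neg I2) (Pos I3), [GB, GA, GA, GB, GA, GB, GA]),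
     (SP (Pos I2) (Pos I3) (Pos I1) (Pos I4), [GB]),
     (SP (Pos I2) (Neg I3) (Neg I1) (Pos I4), [GA, GA, GB, GA, GA]),
     (SP (Neg I2) (Pos I3) (Neg I1) (Pos I4), [GB, GB, GA, GA, GB, GB, GA, GA]),
     (SP (Neg I2) (Neg I3) (Pos I1) (Pos I4), [GB, GB, GA, GA, GB, GA, GA, GB]),
     (SP (Pos I2) (Pos I4) (Pos I3) (Pos I1), [GA, GB, GB, GA, GA, GB, GB, GA]),
     (SP (Pos I2) (Neg I4) (Pos I3) (Neg I1), [GB, GB, GA, GA, GB, GA, GB, GA, GA, GA]),
     (SP (Neg I2) (Pos I4) (Pos I3) (Neg I1), [GA, GB, GA, GA, GA]),
     (SP (Neg I2) (Neg I4) (Pos I3) (Pos I1), [GA, GA, GA, GB, GA]),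
     (SP (Pos I3) (Pos I1) (Pos I2) (Pos I4), [GB, GB]),
     (SP (Pos I3) (Neg I1) (Neg I2) (Pos I4), [GB, GA, GA, GB, GA, GA]),
     (SP (Neg I3) (Pos I1) (Neg I2) (Pos I4), [GA, GA, GB, GB, GA, GA]),
     (SP (Neg I3) (Neg I1) (Pos I2) (Pos I4), [GA, GA, GB, GA, GA, GB]),
     (SP (Pos I3) (Pos I2) (Pos I4) (Pos I1), [GA, GB, GA, GA, GA, GB, GA, GA, GB]),
     (SP (Pos I3) (Pos I2) (Neg I4) (Neg I1), [GB, GA, GB, GA, GB, GB, GA, GB, GA]),
     (SP (Neg I3) (Pos I2) (Pos I4) (Neg I1), [GA, GB, GA, GB, GA, GA, GB]),
     (SP (Neg I3) (Pos I2) (Neg I4) (Pos I1), [GA, GB, GA, GB, GA, GA, GB, GA, GA]),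
     (SP (Pos I4) (Pos I1) (Pos I3) (Pos I2), [GB, GA, GB, GA, GA, GA, GB, GA, GA]),
     (SP (Pos I4) (Neg I1) (Pos I3) (Neg I2), [GA, GA, GA, GB, GB, GA]),
     (SP (Neg I4) (Pos I1) (Pos I3) (Neg I2), [GA, GB, GA, GA, GB, GA]),
     (SP (Neg I4) (Neg I1) (Pos I3) (Pos I2), [GA, GB, GB, GA, GA, GA]),
     (SP (Pos I4) (Pos I2) (Pos I1) (Pos I3), [GA, GA, GB, GA, GB, GA, GA, GB, GA]),
     (SP (Pos I4) (Pos I2) (Neg I1) (Neg I3), [GB, GB, GA, GB, GA, GA, GA, GB]),
     (SP (Neg I4) (Pos I2) (Pos I1) (Neg I3), [GB, GA, GB, GA, GA, GB, GA]),
     (SP (Neg I4) (Pos I2) (Neg I1) (Pos I3), [GB, GB, GA, GA, GA, GB, GA, GB])]"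

lemma word_table_enumerates:
  "[sperm_of_lists p s. p \<leftarrow> perms4, s \<leftarrow> even_signs4] = map fst word_table"
  by (simp add: perms4_def even_signs4_def word_table_def sidx_of_def)

lemma word_table_correct: "list_all_lazy (\<lambda>(z, w). word_eval w gen_a gen_b = z) word_table"
  by (simp add: word_table_def gen_a_def gen_b_def sperm_one_def)

lemma order4_table_complete:
  "list_all_lazy (\<lambda>(z, w). if sperm_order4 z then (z, w) \<in> set order4_table else True) word_table"
  by (simp add: word_table_def order4_table_def order4_table_1_def order4_table_2_def
      order4_table_3_def order4_table_4_def sperm_one_def)

lemma order3_table_complete:
  "list_all_lazy (\<lambda>(z, w). if sperm_order3 z then (z, w) \<in> set order3_table else True) word_table"
  by (simp add: word_table_def order3_table_def sperm_one_def)

lemma word_table_complete: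
  assumes "even_sperm z"
  shows "\<exists>w. (z, w) \<in> set word_table"
proof -
  obtain s1 s2 s3 s4 where z: "z = SP s1 s2 s3 s4"
    by (cases z)
  have "[sidx_index s1, sidx_index s2, sidx_index s3, sidx_index s4] \<in> set perms4"
    using assms unfolding z even_sperm_iff
    by (cases "sidx_index s1"; cases "sidx_index s2"; cases "sidx_index s3"; cases "sidx_index s4")
      (simp_all add: perms4_def sperm_perm_def)
  moreover have "[sidx_is_neg s1, sidx_is_neg s2, sidx_is_neg s3, sidx_is_neg s4] \<in> set even_signs4"
    using assms unfolding z even_sperm_iff
    by (cases s1; cases s2; cases s3; cases s4) (simp_all add: even_signs4_def)
  moreover have "sidx_of (sidx_is_neg s) (sidx_index s) = s" for s
    by (cases s) (simp_all add: sidx_of_def)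
  then have "z = sperm_of_lists [sidx_index s1, sidx_index s2, sidx_index s3, sidx_index s4]
      [sidx_is_neg s1, sidx_is_neg s2, sidx_is_neg s3, sidx_is_neg s4]"
    by (simp add: z)
  ultimately have "z \<in> set [sperm_of_lists p s. p \<leftarrow> perms4, s \<leftarrow> even_signs4]"
    by (auto simp del: sperm_of_lists.simps)
  then show ?thesis
    unfolding word_table_enumerates by force
qed

lemma even_sperm_word:
  assumes "even_sperm z"
  obtains w where "word_eval w gen_a gen_b = z"
  using word_table_complete[OF assms] word_table_correct unfolding list_all_lazy_iff by fastforce

lemma order4_table_word:
  assumes "even_sperm z" "sperm_order4 z"
  obtains w where "(z, w) \<in> set order4_table" "word_eval w gen_a gen_b = z"
  using word_table_complete[OF assms(1)] word_table_correct order4_table_complete assms(2)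
  unfolding list_all_lazy_iff by fastforce

lemma order3_table_word:
  assumes "even_sperm z" "sperm_order3 z"
  obtains w where "(z, w) \<in> set order3_table" "word_eval w gen_a gen_b = z"
  using word_table_complete[OF assms(1)] word_table_correct order3_table_complete assms(2)
  unfolding list_all_lazy_iff by fastforce

lemma WD4_elem_word:
  assumes "m \<in> WD4"
  obtains w where "m = sperm_mat (word_eval w gen_a gen_b)"
  by (metis WD4_elem_is_sperm_mat assms even_sperm_word)

lemma aut_WD4_on_word:
  assumes "f \<in> aut_WD4"
  shows "f (sperm_mat (word_eval w gen_a gen_b)) =
    sperm_mat (word_eval w (aut_sperm f gen_a) (aut_sperm f gen_b))"
  using even_sperm_aut_sperm(2)[OF assms even_sperm_word_eval] aut_sperm_word_eval[OF assms]
  by (simp add: generators)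

lemma aut_sperm_cube:
  assumes f: "f \<in> aut_WD4" and cube: "\<forall>m\<in>WD4. f (f (f m)) = m" and "even_sperm z"
  shows "aut_sperm f (aut_sperm f (aut_sperm f z)) = z"
proof (rule injD[OF inj_sperm_mat])
  show "sperm_mat (aut_sperm f (aut_sperm f (aut_sperm f z))) = sperm_mat z"
    using cube sperm_mat_in_WD4[OF assms(3)] by (simp add: even_sperm_aut_sperm[OF f] assms(3))
qed

section \<open>Automorphisms of order three\<close>

definition mu_gen_a :: sperm where
  "mu_gen_a = SP (Pos I4) (Pos I3) (Pos I1) (Pos I2)"

definition mu_gen_b :: sperm where
  "mu_gen_b = SP (Pos I1) (Neg I4) (Pos I2) (Neg I3)"

definition rho_gen_a :: sperm where
  "rho_gen_a = SP (Pos I2) (Pos I4) (Pos I1) (Pos I3)"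

definition rho_gen_b :: sperm where
  "rho_gen_b = SP (Neg I4) (Neg I1) (Pos I3) (Pos I2)"

lemma vector_4 [simp]:
  "(vector [x1, x2, x3, x4] :: 'a::zero^4) $ 1 = x1"
  "(vector [x1, x2, x3, x4] :: 'a::zero^4) $ 2 = x2"
  "(vector [x1, x2, x3, x4] :: 'a::zero^4) $ 3 = x3"
  "(vector [x1, x2, x3, x4] :: 'a::zero^4) $ 4 = x4"
  by (simp_all add: vector_def)

lemma mu_orthogonal: "mu ** transpose mu = mat 1" "transpose mu ** mu = mat 1"
  by (simp_all add: vec_eq_iff forall_4 matrix_matrix_mult_def sum_4 mu_def transpose_def mat_def)

lemma rho_orthogonal: "rho ** transpose rho = mat 1" "transpose rho ** rho = mat 1"
  by (simp_all add: vec_eq_iff forall_4 matrix_matrix_mult_def sum_4 rho_def transpose_def mat_def)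

lemma conj_by_mu_generators:
  "conj_by mu (sperm_mat gen_a) = sperm_mat mu_gen_a" "conj_by mu (sperm_mat gen_b) = sperm_mat mu_gen_b"
  unfolding conj_by_def matrix_inv_eqI[OF mu_orthogonal]
  by (simp_all add: vec_eq_iff forall_4 matrix_matrix_mult_def sum_4 mu_def transpose_def
      sperm_mat_nth gen_a_def gen_b_def mu_gen_a_def mu_gen_b_def)

lemma conj_by_rho_generators:
  "conj_by rho (sperm_mat gen_a) = sperm_mat rho_gen_a" "conj_by rho (sperm_mat gen_b) = sperm_mat rho_gen_b"
  unfolding conj_by_def matrix_inv_eqI[OF rho_orthogonal]
  by (simp_all add: vec_eq_iff forall_4 matrix_matrix_mult_def sum_4 rho_def transpose_def
      sperm_mat_nth gen_a_def gen_b_def rho_gen_a_def rho_gen_b_def)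

text \<open>The witnesses record, for each candidate pair \<open>(x, y)\<close> of generator images, why it is
  settled: either by an element \<open>g\<close> of \<open>W(D\<^sub>4)\<close> with \<open>x = g a g\<inverse>\<close>, \<open>y = g b g\<inverse>\<close>, or by a signed
  permutation \<open>h\<close> and words \<open>wa\<close>, \<open>wb\<close> spelling out \<open>h a h\<inverse>\<close>, \<open>h b h\<inverse>\<close>, whose evaluation at \<open>(x, y)\<close>
  is the conjugate by \<open>h\<close> of the image pair \<open>(A, B)\<close> of \<open>\<mu>\<close> or \<open>\<rho>\<close>.\<close>

fun conjugacy_witness :: "sperm \<Rightarrow> sperm \<Rightarrow> sperm \<Rightarrow> sperm \<Rightarrow>
    sperm \<times> sperm \<times> gen_letter list \<times> gen_letter list \<Rightarrow> bool" where
  "conjugacy_witness A B x y (h, h', wa, wb) \<longleftrightarrow>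
     h \<odot> h' = sperm_one \<and> h' \<odot> h = sperm_one \<and>
     word_eval wa gen_a gen_b = sperm_conj h h' gen_a \<and>
     word_eval wb gen_a gen_b = sperm_conj h h' gen_b \<and>
     word_eval wa x y = sperm_conj h h' A \<and> word_eval wb x y = sperm_conj h h' B"

fun inner_witness :: "sperm \<Rightarrow> sperm \<Rightarrow> sperm \<times> sperm \<Rightarrow> bool" where
  "inner_witness x y (g, g') \<longleftrightarrow>
     even_sperm g \<and> g \<odot> g' = sperm_one \<and> g' \<odot> g = sperm_one \<and>
     x = sperm_conj g g' gen_a \<and> y = sperm_conj g g' gen_b"

definition mu_witnesses ::
    "((sperm \<times> sperm) \<times> (sperm \<times> sperm \<times> gen_letter list \<times> gen_letter list)) list" where
  "mu_witnesses =
    [((SP (Pos I3) (Pos I4) (Pos I2) (Pos I1), SP (Neg I2) (Pos I3) (Neg I1) (Pos I4)), (SP (Pos I2) (Neg I3) (Neg I4) (Pos I1), SP (Pos I4) (Pos I1) (Neg I2) (Neg I3), [GB, GA, GB, GB], [GB, GA, GB, GA, GA, GA, GB, GB])),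
     ((SP (Pos I3) (Pos I4) (Pos I2) (Pos I1), SP (Pos I4) (Neg I1) (Pos I3) (Neg I2)), (SP (Pos I1) (Pos I3) (Pos I4) (Pos I2), SP (Pos I1) (Pos I4) (Pos I2) (Pos I3), [GB, GA, GA, GB, GA, GB, GA, GA], [GA, GB, GA, GA, GA, GB, GA, GA, GB])),
     ((SP (Neg I3) (Neg I4) (Pos I2) (Pos I1), SP (Pos I2) (Pos I3) (Pos I1) (Pos I4)), (SP (Pos I1) (Neg I2) (Neg I3) (Pos I4), SP (Pos I1) (Neg I2) (Neg I3) (Pos I4), [GA, GA, GA], [GB, GB, GA, GA, GB, GB, GA, GA])),
     ((SP (Neg I3) (Neg I4) (Pos I2) (Pos I1), SP (Pos I4) (Pos I1) (Pos I3) (Pos I2)), (SP (Pos I1) (Neg I2) (Pos I4) (Neg I3), SP (Pos I1) (Neg I2) (Neg I4) (Pos I3), [GA], [GA, GA, GA, GB, GA])),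
     ((SP (Pos I3) (Neg I4) (Neg I2) (Pos I1), SP (Pos I1) (Pos I4) (Neg I2) (Neg I3)), (SP (Pos I1) (Pos I3) (Pos I4) (Neg I2), SP (Pos I1) (Neg I4) (Pos I2) (Pos I3), [GA, GA, GB, GA, GA, GB, GA, GB], [GA, GB, GA, GA, GA, GB, GA, GA, GB])),
     ((SP (Pos I3) (Neg I4) (Neg I2) (Pos I1), SP (Neg I3) (Pos I2) (Neg I4) (Pos I1)), (SP (Pos I2) (Pos I3) (Pos I4) (Neg I1), SP (Neg I4) (Pos I1) (Pos I2) (Pos I3), [GB, GA, GB, GB], [GA, GB, GA, GA, GB, GA, GB, GA, GA])),
     ((SP (Neg I3) (Pos I4) (Neg I2) (Pos I1), SP (Pos I1) (Neg I4) (Neg I2) (Pos I3)), (SP (Pos I1) (Pos I2) (Pos I4) (Neg I3), SP (Pos I1) (Pos I2) (Neg I4) (Pos I3), [GA], [GA, GB, GB, GA, GA, GB, GB, GA])),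
     ((SP (Neg I3) (Pos I4) (Neg I2) (Pos I1), SP (Pos I3) (Pos I2) (Pos I4) (Pos I1)), (SP (Pos I1) (Pos I2) (Neg I3) (Pos I4), SP (Pos I1) (Pos I2) (Neg I3) (Pos I4), [GA, GA, GA], [GA, GA, GB, GA, GA])),
     ((SP (Pos I3) (Neg I4) (Pos I2) (Neg I1), SP (Pos I1) (Pos I4) (Pos I2) (Pos I3)), (SP (Pos I1) (Pos I2) (Pos I3) (Neg I4), SP (Pos I1) (Pos I2) (Pos I3) (Neg I4), [GA, GA, GA], [GB])),
     ((SP (Pos I3) (Neg I4) (Pos I2) (Neg I1), SP (Neg I3) (Pos I2) (Pos I4) (Neg I1)), (SP (Pos I1) (Pos I2) (Neg I4) (Pos I3), SP (Pos I1) (Pos I2) (Pos I4) (Neg I3), [GA], [GB, GB, GA, GA, GB, GA, GB, GA, GA, GA])),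
     ((SP (Neg I3) (Pos I4) (Pos I2) (Neg I1), SP (Pos I1) (Neg I4) (Pos I2) (Neg I3)), (SP (Pos I2) (Neg I3) (Neg I4) (Neg I1), SP (Neg I4) (Pos I1) (Neg I2) (Neg I3), [GB, GA, GA, GA, GB, GB], [GB, GA, GB, GA, GA, GA, GB, GB])),
     ((SP (Neg I3) (Pos I4) (Pos I2) (Neg I1), SP (Pos I3) (Pos I2) (Neg I4) (Neg I1)), (SP (Pos I1) (Neg I3) (Neg I4) (Neg I2), SP (Pos I1) (Neg I4) (Neg I2) (Neg I3), [GB, GA, GA, GB, GA, GB, GA, GA], [GA, GB, GA, GB, GA, GA, GB])),
     ((SP (Pos I3) (Pos I4) (Neg I2) (Neg I1), SP (Pos I2) (Neg I3) (Neg I1) (Pos I4)), (SP (Pos I1) (Neg I2) (Neg I4) (Pos I3), SP (Pos I1) (Neg I2) (Pos I4) (Neg I3), [GA], [GA, GB, GA, GA, GA])),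
     ((SP (Pos I3) (Pos I4) (Neg I2) (Neg I1), SP (Neg I4) (Pos I1) (Pos I3) (Neg I2)), (SP (Pos I1) (Neg I2) (Pos I3) (Neg I4), SP (Pos I1) (Neg I2) (Pos I3) (Neg I4), [GA, GA, GA], [GB, GB, GA, GA, GB, GA, GA, GB])),
     ((SP (Neg I3) (Neg I4) (Neg I2) (Neg I1), SP (Neg I2) (Neg I3) (Pos I1) (Pos I4)), (SP (Pos I1) (Neg I3) (Neg I4) (Pos I2), SP (Pos I1) (Pos I4) (Neg I2) (Neg I3), [GA, GA, GB, GA, GA, GB, GA, GB], [GA, GB, GA, GB, GA, GA, GB])),
     ((SP (Neg I3) (Neg I4) (Neg I2) (Neg I1), SP (Neg I4) (Neg I1) (Pos I3) (Pos I2)), (SP (Pos I2) (Pos I3) (Pos I4) (Pos I1), SP (Pos I4) (Pos I1) (Pos I2) (Pos I3), [GB, GA, GA, GA, GB, GB], [GA, GB, GA, GA, GB, GA, GB, GA, GA])),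
     ((SP (Pos I4) (Pos I3) (Pos I1) (Pos I2), SP (Pos I1) (Neg I4) (Pos I2) (Neg I3)), (SP (Pos I1) (Pos I2) (Pos I3) (Pos I4), SP (Pos I1) (Pos I2) (Pos I3) (Pos I4), [GA], [GB])),
     ((SP (Pos I4) (Pos I3) (Pos I1) (Pos I2), SP (Neg I3) (Pos I2) (Neg I4) (Pos I1)), (SP (Pos I1) (Pos I2) (Pos I4) (Pos I3), SP (Pos I1) (Pos I2) (Pos I4) (Pos I3), [GA, GA, GA], [GA, GB, GB, GA, GA, GB, GB, GA])),
     ((SP (Neg I4) (Neg I3) (Pos I1) (Pos I2), SP (Pos I1) (Neg I4) (Neg I2) (Pos I3)), (SP (Pos I1) (Pos I3) (Neg I4) (Neg I2), SP (Pos I1) (Neg I4) (Pos I2) (Neg I3), [GB, GA, GA, GB, GA, GB, GA, GA], [GB, GA, GB, GA, GB, GB, GA, GB, GA])),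
     ((SP (Neg I4) (Neg I3) (Pos I1) (Pos I2), SP (Neg I3) (Pos I2) (Pos I4) (Neg I1)), (SP (Pos I2) (Pos I3) (Neg I4) (Neg I1), SP (Neg I4) (Pos I1) (Pos I2) (Neg I3), [GB, GA, GA, GA, GB, GB], [GA, GB, GA, GA, GB, GA, GB])),
     ((SP (Neg I4) (Pos I3) (Pos I1) (Neg I2), SP (Neg I2) (Pos I3) (Neg I1) (Pos I4)), (SP (Pos I2) (Neg I3) (Pos I4) (Pos I1), SP (Pos I4) (Pos I1) (Neg I2) (Pos I3), [GB, GA, GA, GA, GB, GB], [GB, GA, GA, GA, GB, GA, GB, GB])),
     ((SP (Neg I4) (Pos I3) (Pos I1) (Neg I2), SP (Neg I4) (Neg I1) (Pos I3) (Pos I2)), (SP (Pos I1) (Pos I3) (Neg I4) (Pos I2), SP (Pos I1) (Pos I4) (Pos I2) (Neg I3), [GA, GA, GB, GA, GA, GB, GA, GB], [GB, GA, GB, GA, GB, GB, GA, GB, GA])),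
     ((SP (Pos I4) (Neg I3) (Pos I1) (Neg I2), SP (Pos I2) (Neg I3) (Neg I1) (Pos I4)), (SP (Pos I1) (Neg I2) (Pos I4) (Pos I3), SP (Pos I1) (Neg I2) (Pos I4) (Pos I3), [GA, GA, GA], [GA, GA, GA, GB, GA])),
     ((SP (Pos I4) (Neg I3) (Pos I1) (Neg I2), SP (Pos I4) (Pos I1) (Pos I3) (Pos I2)), (SP (Pos I1) (Neg I2) (Pos I3) (Pos I4), SP (Pos I1) (Neg I2) (Pos I3) (Pos I4), [GA], [GB, GB, GA, GA, GB, GA, GA, GB])),
     ((SP (Neg I4) (Pos I3) (Neg I1) (Pos I2), SP (Pos I2) (Pos I3) (Pos I1) (Pos I4)), (SP (Pos I1) (Neg I2) (Neg I3) (Neg I4), SP (Pos I1) (Neg I2) (Neg I3) (Neg I4), [GA], [GB, GB, GA, GA, GB, GB, GA, GA])),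
     ((SP (Neg I4) (Pos I3) (Neg I1) (Pos I2), SP (Neg I4) (Pos I1) (Pos I3) (Neg I2)), (SP (Pos I1) (Neg I2) (Neg I4) (Neg I3), SP (Pos I1) (Neg I2) (Neg I4) (Neg I3), [GA, GA, GA], [GA, GB, GA, GA, GA])),
     ((SP (Pos I4) (Neg I3) (Neg I1) (Pos I2), SP (Neg I2) (Neg I3) (Pos I1) (Pos I4)), (SP (Pos I1) (Neg I3) (Pos I4) (Pos I2), SP (Pos I1) (Pos I4) (Neg I2) (Pos I3), [GB, GA, GA, GB, GA, GB, GA, GA], [GA, GB, GA, GB, GA, GA, GB, GA, GA])),
     ((SP (Pos I4) (Neg I3) (Neg I1) (Pos I2), SP (Pos I4) (Neg I1) (Pos I3) (Neg I2)), (SP (Pos I2) (Pos I3) (Neg I4) (Pos I1), SP (Pos I4) (Pos I1) (Pos I2) (Neg I3), [GB, GA, GB, GB], [GA, GB, GA, GA, GB, GA, GB])),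
     ((SP (Pos I4) (Pos I3) (Neg I1) (Neg I2), SP (Pos I1) (Pos I4) (Pos I2) (Pos I3)), (SP (Pos I2) (Neg I3) (Pos I4) (Neg I1), SP (Neg I4) (Pos I1) (Neg I2) (Pos I3), [GB, GA, GB, GB], [GB, GA, GA, GA, GB, GA, GB, GB])),
     ((SP (Pos I4) (Pos I3) (Neg I1) (Neg I2), SP (Pos I3) (Pos I2) (Pos I4) (Pos I1)), (SP (Pos I1) (Neg I3) (Pos I4) (Neg I2), SP (Pos I1) (Neg I4) (Neg I2) (Pos I3), [GA, GA, GB, GA, GA, GB, GA, GB], [GA, GB, GA, GB, GA, GA, GB, GA, GA])),
     ((SP (Neg I4) (Neg I3) (Neg I1) (Neg I2), SP (Pos I1) (Pos I4) (Neg I2) (Neg I3)), (SP (Pos I1) (Pos I2) (Neg I4) (Neg I3), SP (Pos I1) (Pos I2) (Neg I4) (Neg I3), [GA, GA, GA], [GB, GB, GA, GA, GB, GA, GB, GA, GA, GA])),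
     ((SP (Neg I4) (Neg I3) (Neg I1) (Neg I2), SP (Pos I3) (Pos I2) (Neg I4) (Neg I1)), (SP (Pos I1) (Pos I2) (Neg I3) (Neg I4), SP (Pos I1) (Pos I2) (Neg I3) (Neg I4), [GA], [GA, GA, GB, GA, GA]))]"

definition rho_witnesses ::
    "((sperm \<times> sperm) \<times> (sperm \<times> sperm \<times> gen_letter list \<times> gen_letter list)) list" where
  "rho_witnesses =
    [((SP (Pos I2) (Neg I3) (Neg I4) (Pos I1), SP (Pos I2) (Pos I3) (Pos I1) (Pos I4)), (SP (Pos I1) (Pos I2) (Pos I4) (Neg I3), SP (Pos I1) (Pos I2) (Neg I4) (Pos I3), [GA], [GA, GB, GB, GA, GA, GB, GB, GA])),
     ((SP (Neg I2) (Pos I3) (Neg I4) (Pos I1), SP (Pos I1) (Pos I4) (Neg I2) (Neg I3)), (SP (Pos I1) (Neg I2) (Pos I4) (Neg I3), SP (Pos I1) (Neg I2) (Neg I4) (Pos I3), [GA], [GA, GA, GA, GB, GA])),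
     ((SP (Pos I2) (Pos I3) (Neg I4) (Neg I1), SP (Neg I3) (Pos I2) (Neg I4) (Pos I1)), (SP (Pos I1) (Pos I2) (Neg I4) (Pos I3), SP (Pos I1) (Pos I2) (Pos I4) (Neg I3), [GA], [GB, GB, GA, GA, GB, GA, GB, GA, GA, GA])),
     ((SP (Neg I2) (Neg I3) (Neg I4) (Neg I1), SP (Pos I4) (Neg I1) (Pos I3) (Neg I2)), (SP (Pos I1) (Neg I2) (Neg I4) (Pos I3), SP (Pos I1) (Neg I2) (Pos I4) (Neg I3), [GA], [GA, GB, GA, GA, GA])),
     ((SP (Pos I2) (Pos I4) (Pos I1) (Pos I3), SP (Neg I4) (Neg I1) (Pos I3) (Pos I2)), (SP (Pos I1) (Pos I2) (Pos I3) (Pos I4), SP (Pos I1) (Pos I2) (Pos I3) (Pos I4), [GA], [GB])),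
     ((SP (Neg I2) (Neg I4) (Pos I1) (Pos I3), SP (Pos I2) (Pos I3) (Pos I1) (Pos I4)), (SP (Pos I1) (Neg I2) (Pos I3) (Pos I4), SP (Pos I1) (Neg I2) (Pos I3) (Pos I4), [GA], [GB, GB, GA, GA, GB, GA, GA, GB])),
     ((SP (Pos I2) (Neg I4) (Neg I1) (Pos I3), SP (Neg I3) (Pos I2) (Neg I4) (Pos I1)), (SP (Pos I1) (Pos I2) (Neg I3) (Neg I4), SP (Pos I1) (Pos I2) (Neg I3) (Neg I4), [GA], [GA, GA, GB, GA, GA])),
     ((SP (Neg I2) (Pos I4) (Neg I1) (Pos I3), SP (Pos I1) (Pos I4) (Neg I2) (Neg I3)), (SP (Pos I1) (Neg I2) (Neg I3) (Neg I4), SP (Pos I1) (Neg I2) (Neg I3) (Neg I4), [GA], [GB, GB, GA, GA, GB, GB, GA, GA])),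
     ((SP (Neg I3) (Pos I1) (Neg I4) (Pos I2), SP (Neg I3) (Pos I2) (Pos I4) (Neg I1)), (SP (Pos I1) (Pos I2) (Neg I3) (Pos I4), SP (Pos I1) (Pos I2) (Neg I3) (Pos I4), [GA, GA, GA], [GA, GA, GB, GA, GA])),
     ((SP (Pos I3) (Pos I1) (Neg I4) (Neg I2), SP (Pos I4) (Neg I1) (Pos I3) (Neg I2)), (SP (Pos I1) (Pos I2) (Pos I3) (Neg I4), SP (Pos I1) (Pos I2) (Pos I3) (Neg I4), [GA, GA, GA], [GB])),
     ((SP (Pos I3) (Neg I1) (Neg I4) (Pos I2), SP (Pos I2) (Pos I3) (Pos I1) (Pos I4)), (SP (Pos I1) (Neg I2) (Pos I3) (Neg I4), SP (Pos I1) (Neg I2) (Pos I3) (Neg I4), [GA, GA, GA], [GB, GB, GA, GA, GB, GA, GA, GB])),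
     ((SP (Neg I3) (Neg I1) (Neg I4) (Neg I2), SP (Pos I1) (Neg I4) (Neg I2) (Pos I3)), (SP (Pos I1) (Neg I2) (Neg I3) (Pos I4), SP (Pos I1) (Neg I2) (Neg I3) (Pos I4), [GA, GA, GA], [GB, GB, GA, GA, GB, GB, GA, GA])),
     ((SP (Pos I4) (Pos I1) (Pos I2) (Pos I3), SP (Neg I3) (Pos I2) (Pos I4) (Neg I1)), (SP (Pos I1) (Pos I2) (Pos I4) (Pos I3), SP (Pos I1) (Pos I2) (Pos I4) (Pos I3), [GA, GA, GA], [GA, GB, GB, GA, GA, GB, GB, GA])),
     ((SP (Neg I4) (Pos I1) (Neg I2) (Pos I3), SP (Pos I2) (Pos I3) (Pos I1) (Pos I4)), (SP (Pos I1) (Pos I2) (Neg I4) (Neg I3), SP (Pos I1) (Pos I2) (Neg I4) (Neg I3), [GA, GA, GA], [GB, GB, GA, GA, GB, GA, GB, GA, GA, GA])),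
     ((SP (Neg I4) (Neg I1) (Pos I2) (Pos I3), SP (Pos I1) (Neg I4) (Neg I2) (Pos I3)), (SP (Pos I1) (Neg I2) (Neg I4) (Neg I3), SP (Pos I1) (Neg I2) (Neg I4) (Neg I3), [GA, GA, GA], [GA, GB, GA, GA, GA])),
     ((SP (Pos I4) (Neg I1) (Neg I2) (Pos I3), SP (Neg I4) (Neg I1) (Pos I3) (Pos I2)), (SP (Pos I1) (Neg I2) (Pos I4) (Pos I3), SP (Pos I1) (Neg I2) (Pos I4) (Pos I3), [GA, GA, GA], [GA, GA, GA, GB, GA]))]"

definition inner_witnesses :: "((sperm \<times> sperm) \<times> (sperm \<times> sperm)) list" where
  "inner_witnesses =
    [((SP (Pos I1) (Neg I2) (Neg I4) (Pos I3), SP (Pos I2) (Pos I3) (Pos I1) (Pos I4)), (SP (Pos I1) (Pos I2) (Pos I3) (Pos I4), SP (Pos I1) (Pos I2) (Pos I3) (Pos I4))),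
     ((SP (Pos I1) (Neg I3) (Pos I2) (Neg I4), SP (Pos I4) (Pos I1) (Pos I3) (Pos I2)), (SP (Pos I1) (Pos I4) (Pos I2) (Pos I3), SP (Pos I1) (Pos I3) (Pos I4) (Pos I2))),
     ((SP (Pos I1) (Neg I3) (Pos I2) (Neg I4), SP (Pos I4) (Neg I1) (Pos I3) (Neg I2)), (SP (Pos I1) (Pos I4) (Neg I2) (Neg I3), SP (Pos I1) (Neg I3) (Neg I4) (Pos I2))),
     ((SP (Pos I1) (Pos I3) (Neg I2) (Neg I4), SP (Neg I4) (Pos I1) (Pos I3) (Neg I2)), (SP (Pos I1) (Neg I4) (Pos I2) (Neg I3), SP (Pos I1) (Pos I3) (Neg I4) (Neg I2))),
     ((SP (Pos I1) (Pos I3) (Neg I2) (Neg I4), SP (Neg I4) (Neg I1) (Pos I3) (Pos I2)), (SP (Pos I1) (Neg I4) (Neg I2) (Pos I3), SP (Pos I1) (Neg I3) (Pos I4) (Neg I2))),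
     ((SP (Neg I1) (Neg I3) (Pos I2) (Pos I4), SP (Pos I3) (Pos I2) (Neg I4) (Neg I1)), (SP (Neg I4) (Pos I1) (Pos I3) (Neg I2), SP (Pos I2) (Neg I4) (Pos I3) (Neg I1))),
     ((SP (Neg I1) (Neg I3) (Pos I2) (Pos I4), SP (Neg I3) (Pos I2) (Pos I4) (Neg I1)), (SP (Neg I4) (Pos I1) (Neg I3) (Pos I2), SP (Pos I2) (Pos I4) (Neg I3) (Neg I1))),
     ((SP (Neg I1) (Pos I3) (Neg I2) (Pos I4), SP (Pos I3) (Pos I2) (Pos I4) (Pos I1)), (SP (Pos I4) (Pos I1) (Pos I3) (Pos I2), SP (Pos I2) (Pos I4) (Pos I3) (Pos I1))),
     ((SP (Neg I1) (Pos I3) (Neg I2) (Pos I4), SP (Neg I3) (Pos I2) (Neg I4) (Pos I1)), (SP (Pos I4) (Pos I1) (Neg I3) (Neg I2), SP (Pos I2) (Neg I4) (Neg I3) (Pos I1))),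
     ((SP (Pos I1) (Neg I4) (Neg I3) (Pos I2), SP (Neg I3) (Pos I2) (Neg I4) (Pos I1)), (SP (Pos I1) (Neg I3) (Pos I4) (Neg I2), SP (Pos I1) (Neg I4) (Neg I2) (Pos I3))),
     ((SP (Pos I1) (Neg I4) (Neg I3) (Pos I2), SP (Neg I3) (Pos I2) (Pos I4) (Neg I1)), (SP (Pos I1) (Neg I3) (Neg I4) (Pos I2), SP (Pos I1) (Pos I4) (Neg I2) (Neg I3))),
     ((SP (Pos I1) (Pos I4) (Neg I3) (Neg I2), SP (Pos I3) (Pos I2) (Pos I4) (Pos I1)), (SP (Pos I1) (Pos I3) (Pos I4) (Pos I2), SP (Pos I1) (Pos I4) (Pos I2) (Pos I3))),
     ((SP (Pos I1) (Pos I4) (Neg I3) (Neg I2), SP (Pos I3) (Pos I2) (Neg I4) (Neg I1)), (SP (Pos I1) (Pos I3) (Neg I4) (Neg I2), SP (Pos I1) (Neg I4) (Pos I2) (Neg I3))),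
     ((SP (Neg I1) (Neg I4) (Pos I3) (Pos I2), SP (Pos I2) (Pos I3) (Pos I1) (Pos I4)), (SP (Pos I3) (Pos I1) (Pos I2) (Pos I4), SP (Pos I2) (Pos I3) (Pos I1) (Pos I4))),
     ((SP (Neg I1) (Neg I4) (Pos I3) (Pos I2), SP (Neg I2) (Neg I3) (Pos I1) (Pos I4)), (SP (Pos I3) (Pos I1) (Neg I2) (Neg I4), SP (Pos I2) (Neg I3) (Pos I1) (Neg I4))),
     ((SP (Neg I1) (Pos I4) (Pos I3) (Neg I2), SP (Pos I2) (Neg I3) (Neg I1) (Pos I4)), (SP (Neg I3) (Pos I1) (Pos I2) (Neg I4), SP (Pos I2) (Pos I3) (Neg I1) (Neg I4))),
     ((SP (Neg I1) (Pos I4) (Pos I3) (Neg I2), SP (Neg I2) (Pos I3) (Neg I1) (Pos I4)), (SP (Neg I3) (Pos I1) (Neg I2) (Pos I4), SP (Pos I2) (Neg I3) (Neg I1) (Pos I4))),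
     ((SP (Neg I3) (Pos I2) (Pos I1) (Neg I4), SP (Pos I1) (Neg I4) (Pos I2) (Neg I3)), (SP (Neg I2) (Pos I4) (Neg I3) (Pos I1), SP (Pos I4) (Neg I1) (Neg I3) (Pos I2))),
     ((SP (Neg I3) (Pos I2) (Pos I1) (Neg I4), SP (Pos I1) (Neg I4) (Neg I2) (Pos I3)), (SP (Pos I2) (Neg I4) (Neg I3) (Pos I1), SP (Pos I4) (Pos I1) (Neg I3) (Neg I2))),
     ((SP (Neg I3) (Neg I2) (Pos I1) (Pos I4), SP (Pos I4) (Pos I1) (Pos I3) (Pos I2)), (SP (Pos I4) (Pos I2) (Pos I1) (Pos I3), SP (Pos I3) (Pos I2) (Pos I4) (Pos I1))),
     ((SP (Neg I3) (Neg I2) (Pos I1) (Pos I4), SP (Neg I4) (Neg I1) (Pos I3) (Pos I2)), (SP (Neg I4) (Neg I2) (Pos I1) (Pos I3), SP (Pos I3) (Neg I2) (Pos I4) (Neg I1))),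
     ((SP (Pos I3) (Pos I2) (Neg I1) (Neg I4), SP (Pos I1) (Pos I4) (Pos I2) (Pos I3)), (SP (Pos I2) (Pos I4) (Pos I3) (Pos I1), SP (Pos I4) (Pos I1) (Pos I3) (Pos I2))),
     ((SP (Pos I3) (Pos I2) (Neg I1) (Neg I4), SP (Pos I1) (Pos I4) (Neg I2) (Neg I3)), (SP (Neg I2) (Neg I4) (Pos I3) (Pos I1), SP (Pos I4) (Neg I1) (Pos I3) (Neg I2))),
     ((SP (Pos I3) (Neg I2) (Neg I1) (Pos I4), SP (Neg I4) (Pos I1) (Pos I3) (Neg I2)), (SP (Neg I4) (Pos I2) (Pos I1) (Neg I3), SP (Pos I3) (Pos I2) (Neg I4) (Neg I1))),
     ((SP (Pos I3) (Neg I2) (Neg I1) (Pos I4), SP (Pos I4) (Neg I1) (Pos I3) (Neg I2)), (SP (Pos I4) (Neg I2) (Pos I1) (Neg I3), SP (Pos I3) (Neg I2) (Neg I4) (Pos I1))),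
     ((SP (Neg I4) (Pos I2) (Neg I3) (Pos I1), SP (Pos I2) (Pos I3) (Pos I1) (Pos I4)), (SP (Pos I2) (Pos I3) (Pos I1) (Pos I4), SP (Pos I3) (Pos I1) (Pos I2) (Pos I4))),
     ((SP (Neg I4) (Pos I2) (Neg I3) (Pos I1), SP (Neg I2) (Pos I3) (Neg I1) (Pos I4)), (SP (Neg I2) (Neg I3) (Pos I1) (Pos I4), SP (Pos I3) (Neg I1) (Neg I2) (Pos I4))),
     ((SP (Neg I4) (Neg I2) (Pos I3) (Pos I1), SP (Pos I1) (Neg I4) (Neg I2) (Pos I3)), (SP (Neg I3) (Pos I2) (Neg I4) (Pos I1), SP (Pos I4) (Pos I2) (Neg I1) (Neg I3))),
     ((SP (Neg I4) (Neg I2) (Pos I3) (Pos I1), SP (Pos I1) (Pos I4) (Neg I2) (Neg I3)), (SP (Pos I3) (Neg I2) (Neg I4) (Pos I1), SP (Pos I4) (Neg I2) (Pos I1) (Neg I3))),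
     ((SP (Pos I4) (Pos I2) (Neg I3) (Neg I1), SP (Neg I2) (Neg I3) (Pos I1) (Pos I4)), (SP (Neg I2) (Pos I3) (Pos I1) (Neg I4), SP (Pos I3) (Neg I1) (Pos I2) (Neg I4))),
     ((SP (Pos I4) (Pos I2) (Neg I3) (Neg I1), SP (Pos I2) (Neg I3) (Neg I1) (Pos I4)), (SP (Pos I2) (Neg I3) (Pos I1) (Neg I4), SP (Pos I3) (Pos I1) (Neg I2) (Neg I4))),
     ((SP (Pos I4) (Neg I2) (Pos I3) (Neg I1), SP (Pos I1) (Pos I4) (Pos I2) (Pos I3)), (SP (Pos I3) (Pos I2) (Pos I4) (Pos I1), SP (Pos I4) (Pos I2) (Pos I1) (Pos I3))),
     ((SP (Pos I4) (Neg I2) (Pos I3) (Neg I1), SP (Pos I1) (Neg I4) (Pos I2) (Neg I3)), (SP (Neg I3) (Neg I2) (Pos I4) (Pos I1), SP (Pos I4) (Neg I2) (Neg I1) (Pos I3)))]"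

lemma mu_witnesses_correct:
  "list_all_lazy (\<lambda>((x, y), wit). conjugacy_witness mu_gen_a mu_gen_b x y wit) mu_witnesses"
  by (simp add: mu_witnesses_def gen_a_def gen_b_def mu_gen_a_def mu_gen_b_def sperm_conj_def
      sperm_one_def)

lemma rho_witnesses_correct:
  "list_all_lazy (\<lambda>((x, y), wit). conjugacy_witness rho_gen_a rho_gen_b x y wit) rho_witnesses"
  by (simp add: rho_witnesses_def gen_a_def gen_b_def rho_gen_a_def rho_gen_b_def sperm_conj_def
      sperm_one_def)

lemma inner_witnesses_correct:
  "list_all_lazy (\<lambda>((x, y), wit). inner_witness x y wit) inner_witnesses"
  by (simp add: inner_witnesses_def gen_a_def gen_b_def sperm_conj_def sperm_one_def even_sperm_iff
      sperm_perm_def)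

lemma aut_conjugate_if_conjugacy_witness:
  assumes f: "f \<in> aut_WD4"
    and M: "M ** M' = mat 1" "M' ** M = mat 1"
      "conj_by M (sperm_mat gen_a) = sperm_mat A" "conj_by M (sperm_mat gen_b) = sperm_mat B"
    and "conjugacy_witness A B (aut_sperm f gen_a) (aut_sperm f gen_b) wit"
  shows "aut_conjugate f (conj_by M)"
proof -
  obtain h h' wa wb where "wit = (h, h', wa, wb)"
    by (cases wit)
  with assms(6)
  have wit: "conjugacy_witness A B (aut_sperm f gen_a) (aut_sperm f gen_b) (h, h', wa, wb)"
    by simp
  let ?x = "aut_sperm f gen_a" and ?y = "aut_sperm f gen_b" and ?\<psi> = "conj_by (sperm_mat h)"
  have inverse: "h \<odot> h' = sperm_one" "h' \<odot> h = sperm_one"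
    using wit by simp_all
  note conj_h = conj_by_sperm_mat[OF inverse] and conj_word = sperm_conj_word_eval[OF inverse]
  have "f (?\<psi> m) = ?\<psi> (conj_by M m)" if "m \<in> WD4" for m
  proof -
    obtain w where m: "m = sperm_mat (word_eval w gen_a gen_b)"
      using \<open>m \<in> WD4\<close> by (rule WD4_elem_word)
    have "f (?\<psi> m) = f (sperm_mat (word_eval w (word_eval wa gen_a gen_b) (word_eval wb gen_a gen_b)))"
      using wit by (simp add: m conj_h conj_word)
    also have "\<dots> = sperm_mat (word_eval w (word_eval wa ?x ?y) (word_eval wb ?x ?y))"
      by (simp add: aut_sperm_word_eval[OF f] even_sperm_word_eval generators
          flip: even_sperm_aut_sperm(2)[OF f])
    also have "\<dots> = ?\<psi> (conj_by M m)"
      using wit by (simp add: m conj_by_word_eval[OF M] conj_h conj_word)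
    finally show ?thesis .
  qed
  then show ?thesis
    using conj_by_sperm_mat_aut[OF inverse] by (auto simp: aut_conjugate_def)
qed

lemma inner_if_inner_witness:
  assumes f: "f \<in> aut_WD4" and "inner_witness (aut_sperm f gen_a) (aut_sperm f gen_b) wit"
  shows "inner_WD4 f"
proof -
  obtain g g' where "wit = (g, g')"
    by (cases wit)
  with assms(2) have wit: "inner_witness (aut_sperm f gen_a) (aut_sperm f gen_b) (g, g')"
    by simp
  have inverse: "g \<odot> g' = sperm_one" "g' \<odot> g = sperm_one"
    using wit by simp_all
  have "f m = conj_by (sperm_mat g) m" if "m \<in> WD4" for m
  proof -
    obtain w where m: "m = sperm_mat (word_eval w gen_a gen_b)"
      using \<open>m \<in> WD4\<close> by (rule WD4_elem_word)
    show ?thesis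
      using wit by (simp add: m aut_WD4_on_word[OF f] conj_by_sperm_mat[OF inverse]
          sperm_conj_word_eval[OF inverse])
  qed
  moreover have "sperm_mat g \<in> WD4"
    using wit by (simp add: sperm_mat_in_WD4)
  ultimately show ?thesis
    by (auto simp: inner_WD4_def)
qed

definition classified_pair :: "sperm \<Rightarrow> sperm \<Rightarrow> bool" where
  "classified_pair x y \<longleftrightarrow>
     (x, y) \<in> set (map fst mu_witnesses @ map fst rho_witnesses @ map fst inner_witnesses)"

text \<open>If \<open>f\<close> maps the generators \<open>a\<close>, \<open>b\<close> to \<open>x = w\<^sub>x(a, b)\<close> and \<open>y = w\<^sub>y(a, b)\<close>, then \<open>f\<^sup>2 a = w\<^sub>x(x, y)\<close>,
  \<open>f\<^sup>2 b = w\<^sub>y(x, y)\<close>, and the two innermost conditions express \<open>f\<^sup>3 a = a\<close>, \<open>f\<^sup>3 b = b\<close>.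
  The nested conditionals let the simplifier discard a pair as soon as one test fails.\<close>

definition images_classified :: "(sperm \<times> gen_letter list) list \<Rightarrow> bool" where
  "images_classified xs \<longleftrightarrow> list_all_lazy (\<lambda>(x, wx). list_all_lazy (\<lambda>(y, wy).
     if sperm_order4 (x \<odot> y) then
       if sperm_order4 (x \<odot> (y \<odot> y)) then
         if word_eval wx (word_eval wx x y) (word_eval wy x y) = gen_a then
           if word_eval wy (word_eval wx x y) (word_eval wy x y) = gen_b then classified_pair x y
           else True
         else True
       else True
     else True) order3_table) xs"

lemma images_classified_order4_table_1: "images_classified order4_table_1"
  unfolding images_classified_def
  by (simp add: order4_table_1_def order3_table_def gen_a_def gen_b_def sperm_one_def
      classified_pair_def mu_witnesses_def rho_witnesses_def inner_witnesses_def)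

lemma images_classified_order4_table_2: "images_classified order4_table_2"
  unfolding images_classified_def
  by (simp add: order4_table_2_def order3_table_def gen_a_def gen_b_def sperm_one_def
      classified_pair_def mu_witnesses_def rho_witnesses_def inner_witnesses_def)

lemma images_classified_order4_table_3: "images_classified order4_table_3"
  unfolding images_classified_def
  by (simp add: order4_table_3_def order3_table_def gen_a_def gen_b_def sperm_one_def
      classified_pair_def mu_witnesses_def rho_witnesses_def inner_witnesses_def)

lemma images_classified_order4_table_4: "images_classified order4_table_4"
  unfolding images_classified_def
  by (simp add: order4_table_4_def order3_table_def gen_a_def gen_b_def sperm_one_def
      classified_pair_def mu_witnesses_def rho_witnesses_def inner_witnesses_def)

lemma images_classified_order4_table: "images_classified order4_table"
  using images_classified_order4_table_1 images_classified_order4_table_2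
    images_classified_order4_table_3 images_classified_order4_table_4
  unfolding images_classified_def order4_table_def list_all_lazy_append by blast

lemma images_classifiedD:
  assumes "images_classified xs" "(x, wx) \<in> set xs" "(y, wy) \<in> set order3_table"
    and "sperm_order4 (x \<odot> y)" "sperm_order4 (x \<odot> (y \<odot> y))"
    and "word_eval wx (word_eval wx x y) (word_eval wy x y) = gen_a"
    and "word_eval wy (word_eval wx x y) (word_eval wy x y) = gen_b"
  shows "classified_pair x y"
  using assms unfolding images_classified_def list_all_lazy_iff by fastforce

lemma generator_images_classified:
  assumes f: "f \<in> aut_WD4" and cube: "\<forall>m\<in>WD4. f (f (f m)) = m"
  shows "classified_pair (aut_sperm f gen_a) (aut_sperm f gen_b)"
proof -
  define x y where "x = aut_sperm f gen_a" and "y = aut_sperm f gen_b"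
  have even: "even_sperm x" "even_sperm y"
    using even_sperm_aut_sperm(1)[OF f] generators by (simp_all add: x_def y_def)
  obtain wx where wx: "(x, wx) \<in> set order4_table" "word_eval wx gen_a gen_b = x"
    using order4_table_word[OF even(1)] sperm_order4_aut_sperm[OF f] generators x_def by blast
  obtain wy where wy: "(y, wy) \<in> set order3_table" "word_eval wy gen_a gen_b = y"
    using order3_table_word[OF even(2)] sperm_order3_aut_sperm[OF f] generators y_def by blast
  have "sperm_order4 (x \<odot> y)" "sperm_order4 (x \<odot> (y \<odot> y))"
    using sperm_order4_aut_sperm[OF f] generators
    by (simp_all add: x_def y_def even_sperm_mult flip: aut_sperm_mult[OF f])
  moreover have "aut_sperm f x = word_eval wx x y" "aut_sperm f y = word_eval wy x y"
    using aut_sperm_word_eval[OF f generators(1,2), of wx]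
      aut_sperm_word_eval[OF f generators(1,2), of wy]
    unfolding wx(2) wy(2) by (simp_all add: x_def y_def)
  then have "word_eval wx (word_eval wx x y) (word_eval wy x y) = aut_sperm f (aut_sperm f x)"
    "word_eval wy (word_eval wx x y) (word_eval wy x y) = aut_sperm f (aut_sperm f y)"
    by (simp_all add: aut_sperm_word_eval[OF f even])
  moreover have "aut_sperm f (aut_sperm f x) = gen_a" "aut_sperm f (aut_sperm f y) = gen_b"
    using aut_sperm_cube[OF f cube] generators by (simp_all add: x_def y_def)
  ultimately show ?thesis
    using images_classifiedD[OF images_classified_order4_table wx(1) wy(1)] by (simp add: x_def y_def)
qed

lemma aut_conjugate_if_triality_images:
  assumes f: "f \<in> aut_WD4"
    and "(aut_sperm f gen_a, aut_sperm f gen_b) \<in> fst ` set mu_witnesses \<union> fst ` set rho_witnesses"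
  shows "aut_conjugate f (conj_by mu) \<or> aut_conjugate f (conj_by rho)"
proof -
  let ?x = "aut_sperm f gen_a" and ?y = "aut_sperm f gen_b"
  from assms(2) consider (mu) wit where "((?x, ?y), wit) \<in> set mu_witnesses"
    | (rho) wit where "((?x, ?y), wit) \<in> set rho_witnesses"
    by force
  then show ?thesis
  proof cases
    case mu
    then have "conjugacy_witness mu_gen_a mu_gen_b ?x ?y wit"
      using list_all_lazy_memD[OF mu_witnesses_correct] by fastforce
    then show ?thesis
      using aut_conjugate_if_conjugacy_witness[OF f mu_orthogonal conj_by_mu_generators] by blast
  next
    case rho
    then have "conjugacy_witness rho_gen_a rho_gen_b ?x ?y wit"
      using list_all_lazy_memD[OF rho_witnesses_correct] by fastforce
    then show ?thesis
      using aut_conjugate_if_conjugacy_witness[OF f rho_orthogonal conj_by_rho_generators] by blast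
  qed
qed

lemma inner_if_inner_images:
  assumes f: "f \<in> aut_WD4"
    and "(aut_sperm f gen_a, aut_sperm f gen_b) \<in> fst ` set inner_witnesses"
  shows "inner_WD4 f"
proof -
  from assms(2) obtain wit where "((aut_sperm f gen_a, aut_sperm f gen_b), wit) \<in> set inner_witnesses"
    by force
  then have "inner_witness (aut_sperm f gen_a) (aut_sperm f gen_b) wit"
    using list_all_lazy_memD[OF inner_witnesses_correct] by fastforce
  then show ?thesis
    by (rule inner_if_inner_witness[OF f])
qed

theorem proposition5p3:
  assumes "trialitarian f"
  shows "aut_conjugate f (conj_by mu) \<or> aut_conjugate f (conj_by rho)"
proof -
  have f: "f \<in> aut_WD4" and cube: "\<forall>m\<in>WD4. f (f (f m)) = m" and not_inner: "\<not> inner_WD4 f"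
    using assms by (auto simp: trialitarian_def)
  have "classified_pair (aut_sperm f gen_a) (aut_sperm f gen_b)"
    using f cube by (rule generator_images_classified)
  then show ?thesis
    using aut_conjugate_if_triality_images[OF f] inner_if_inner_images[OF f] not_inner
    by (auto simp: classified_pair_def)
qed

end
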